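(* Assume $E_{l,m}$ is toric, i.e. $q-p$ divides $m$, and write $m=a(q-p)$. Then the set $\mathcal H^B$ of $B$-fixed points of $\mathcal H$ consists of the single point $[J_0]$, where $J_0=(X_0^{q-p},\; X_2,\; X_4,\; X_1^{aq}X_3^{ap}) \subset \mathbb C[X_0,X_1,X_2,X_3,X_4]$.
   Context: Let $l=p/q \in \mathbb Q \cap (0,1]$ with $\gcd(p,q)=1$ and $m \in \mathbb N$. Let $H_{q-p}=\{X_0^{q-p}=X_1X_4-X_2X_3\} \subset \mathbb C^5$, where $\mathbb C^5=V(0)\oplus V(1)\oplus V(1)$ with coordinates $X_0,\dots,X_4$ and $SL(2)$ acts by left multiplication on the matrix $\begin{pmatrix} X_1 & X_3\\ X_2 & X_4\end{pmatrix}$. Let $G_0=\{\mathrm{diag}(t,t^{-p},t^{-p},t^q,t^q): t\in\mathbb C^*\}$ and $G_m=\{\mathrm{diag}(1,\zeta^{-1},\zeta^{-1},\zeta,\zeta): \zeta^m=1\}$; these commute with the $SL(2)$-action. Let $E_{l,m}=H_{q-p}/\!\!/(G_0\times G_m)$ (Popov's 3-dimensional affine normal quasihomogeneous $SL(2)$-variety). Identify $\mathrm{Irr}(G_0\times G_m)$ with $\mathbb Z\times\mathbb Z/m\mathbb Z$ and let $h(n,d)=1$ for all $(n,d)$ (the Hilbert function of the general fibers of the quotient morphism). Let $\mathcal H=\mathrm{Hilb}^{G_0\times G_m}_h(H_{q-p})$ be the invariant Hilbert scheme, with the $SL(2)$-action induced from $H_{q-p}$, and let $B\subset SL(2)$ be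 the Borel subgroup of upper triangular matrices. *)

theory Defs
  imports Complex_Main
begin

text \<open>Points of C^5 are modelled as functions nat => complex, of which only the
coordinates 0..4 matter. The coordinate ring C[X_0,...,X_4] is modelled (faithfully,
since C is infinite) as the ring of polynomial functions in X_0,...,X_4.\<close>

type_synonym pt = "nat \<Rightarrow> complex"
type_synonym pfun = "pt \<Rightarrow> complex"

inductive_set polyfun :: "pfun set" where
  pf_const: "(\<lambda>x. c) \<in> polyfun"
| pf_coord: "i < 5 \<Longrightarrow> (\<lambda>x. x i) \<in> polyfun"
| pf_add: "f \<in> polyfun \<Longrightarrow> g \<in> polyfun \<Longrightarrow> (\<lambda>x. f x + g x) \<in> polyfun"
| pf_mult: "f \<in> polyfun \<Longrightarrow> g \<in> polyfun \<Longrightarrow> (\<lambda>x. f x * g x) \<in> polyfun"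

definition is_pf_ideal :: "pfun set \<Rightarrow> bool" where
  "is_pf_ideal I \<longleftrightarrow> I \<subseteq> polyfun \<and> (\<lambda>x. 0) \<in> I \<and>
     (\<forall>f\<in>I. \<forall>g\<in>I. (\<lambda>x. f x + g x) \<in> I) \<and>
     (\<forall>f\<in>I. \<forall>h\<in>polyfun. (\<lambda>x. h x * f x) \<in> I)"

definition pf_ideal_gen :: "pfun list \<Rightarrow> pfun set" where
  "pf_ideal_gen gs = {f. \<exists>hs. length hs = length gs \<and> set hs \<subseteq> polyfun \<and>
      f = (\<lambda>x. \<Sum>i<length gs. (hs ! i) x * (gs ! i) x)}"

definition H_eq :: "nat \<Rightarrow> nat \<Rightarrow> pfun" where
  "H_eq p q = (\<lambda>x. x 0 ^ (q - p) - (x 1 * x 4 - x 2 * x 3))"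

definition gact :: "nat \<Rightarrow> nat \<Rightarrow> complex \<Rightarrow> complex \<Rightarrow> pt \<Rightarrow> pt" where
  "gact p q t \<zeta> x = x(0 := t * x 0,
                      1 := inverse (t ^ p * \<zeta>) * x 1,
                      2 := inverse (t ^ p * \<zeta>) * x 2,
                      3 := t ^ q * \<zeta> * x 3,
                      4 := t ^ q * \<zeta> * x 4)"

definition Ggrp :: "nat \<Rightarrow> (complex \<times> complex) set" where
  "Ggrp m = {(t, \<zeta>). t \<noteq> 0 \<and> \<zeta> ^ m = 1}"

text \<open>Character (n,d) in Z x Z/mZ of G_0 x G_m.\<close>
definition chi :: "int \<Rightarrow> int \<Rightarrow> complex \<Rightarrow> complex \<Rightarrow> complex" where
  "chi n d t \<zeta> = t powi n * \<zeta> powi d"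

text \<open>Action of the Borel element [[alpha, beta],[0, 1/alpha]] by left
multiplication on the matrix [[X1, X3],[X2, X4]].\<close>
definition bact :: "complex \<Rightarrow> complex \<Rightarrow> pt \<Rightarrow> pt" where
  "bact \<alpha> \<beta> x = x(1 := \<alpha> * x 1 + \<beta> * x 2,
                    2 := inverse \<alpha> * x 2,
                    3 := \<alpha> * x 3 + \<beta> * x 4,
                    4 := inverse \<alpha> * x 4)"

text \<open>Isotypic component of type (n,d) of the G-module C[X]/I, as a set of
representatives in C[X].\<close>
definition weight_space_mod :: "nat \<Rightarrow> nat \<Rightarrow> nat \<Rightarrow> pfun set \<Rightarrow> int \<Rightarrow> int \<Rightarrow> pfun set" where
  "weight_space_mod p q m I n d = {f \<in> polyfun. \<forall>(t, \<zeta>) \<in> Ggrp m.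
       (\<lambda>x. f (gact p q t \<zeta> x) - chi n d t \<zeta> * f x) \<in> I}"

definition dim_one_mod :: "pfun set \<Rightarrow> pfun set \<Rightarrow> bool" where
  "dim_one_mod W I \<longleftrightarrow> (\<exists>f\<in>W. f \<notin> I \<and> (\<forall>g\<in>W. \<exists>c. (\<lambda>x. g x - c * f x) \<in> I))"

text \<open>Closed points of the invariant Hilbert scheme Hilb^{G_0 x G_m}_h(H_{q-p}) with
h = 1: G-stable ideals of C[H_{q-p}] (= ideals of C[X] containing the equation of
H_{q-p}) whose quotient has every isotypic component of dimension h(n,d) = 1.\<close>
definition inv_hilb_points :: "nat \<Rightarrow> nat \<Rightarrow> nat \<Rightarrow> pfun set set" where
  "inv_hilb_points p q m = {I. is_pf_ideal I \<and> H_eq p q \<in> I \<and>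
      (\<forall>(t, \<zeta>) \<in> Ggrp m. \<forall>f \<in> I. (\<lambda>x. f (gact p q t \<zeta> x)) \<in> I) \<and>
      (\<forall>n d. dim_one_mod (weight_space_mod p q m I n d) I)}"

text \<open>B-fixed points: B-stable ideals.\<close>
definition B_stable :: "pfun set \<Rightarrow> bool" where
  "B_stable I \<longleftrightarrow> (\<forall>\<alpha> \<beta>. \<alpha> \<noteq> 0 \<longrightarrow> (\<forall>f\<in>I. (\<lambda>x. f (bact \<alpha> \<beta> x)) \<in> I))"

definition J0 :: "nat \<Rightarrow> nat \<Rightarrow> nat \<Rightarrow> pfun set" where
  "J0 p q a = pf_ideal_gen [(\<lambda>x. x 0 ^ (q - p)), (\<lambda>x. x 2), (\<lambda>x. x 4),
                            (\<lambda>x. x 1 ^ (a * q) * x 3 ^ (a * p))]"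

end

theory Submission
  imports Defs "HOL-Library.Function_Algebras" "HOL-Computational_Algebra.Polynomial"
begin

text \<open>The ideal \<open>J0\<close> is generated by monomials, so the monomials outside it, the standard
  monomials \<open>X\<^sub>0\<^sup>i X\<^sub>1\<^sup>j X\<^sub>3\<^sup>k\<close> with \<open>i < q - p\<close> not divisible by \<open>X\<^sub>1\<^sup>a\<^sup>q X\<^sub>3\<^sup>a\<^sup>p\<close>, form a basis of
  \<open>\<complex>[X]/J0\<close>. The weight of \<open>X\<^sub>0\<^sup>i X\<^sub>1\<^sup>j X\<^sub>3\<^sup>k\<close> is \<open>(i - p j + q k, k - j mod m)\<close>, and the
  exponents of a given weight form a progression \<open>(j, k) \<mapsto> (j - a q, k - a p)\<close> with exactly one
  standard member. Hence every isotypic component of \<open>\<complex>[X]/J0\<close> is a line, so \<open>J0\<close> is a point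
  of the invariant Hilbert scheme; it is \<open>B\<close>-stable because \<open>B\<close> preserves \<open>(X\<^sub>2, X\<^sub>4)\<close> and acts on
  \<open>X\<^sub>1, X\<^sub>3\<close> by scalars modulo it.

  Conversely, in a \<open>B\<close>-stable point \<open>I\<close> the equal weights of \<open>X\<^sub>1\<close> and \<open>X\<^sub>2\<close>, of \<open>X\<^sub>3\<close> and \<open>X\<^sub>4\<close>,
  and of \<open>1\<close> and \<open>X\<^sub>1\<^sup>a\<^sup>q X\<^sub>3\<^sup>a\<^sup>p\<close> force linear relations in \<open>I\<close>, from which the unipotent and
  the toral elements of \<open>B\<close> extract \<open>X\<^sub>2\<close>, \<open>X\<^sub>4\<close> and \<open>X\<^sub>1\<^sup>a\<^sup>q X\<^sub>3\<^sup>a\<^sup>p\<close>; with the equation of \<open>H\<^sub>q\<^sub>-\<^sub>p\<close>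
  this gives \<open>J0 \<subseteq> I\<close>. A standard monomial in \<open>I\<close> would kill its whole isotypic component,
  so \<open>I = J0\<close>.\<close>

section \<open>Polynomial functions and their ideals\<close>

lemma pf_smult: "f \<in> polyfun \<Longrightarrow> (\<lambda>x. c * f x) \<in> polyfun"
  using pf_mult[OF pf_const[of c]] .

lemma pf_pow: "f \<in> polyfun \<Longrightarrow> (\<lambda>x. f x ^ n) \<in> polyfun"
  by (induction n) (auto intro: pf_const pf_mult)

lemma pf_sum:
  "finite A \<Longrightarrow> (\<And>a. a \<in> A \<Longrightarrow> f a \<in> polyfun) \<Longrightarrow> (\<lambda>x. \<Sum>a\<in>A. f a x) \<in> polyfun"
  by (induction A rule: finite_induct) (auto intro: pf_const pf_add)

lemma pf_prod:
  "finite A \<Longrightarrow> (\<And>a. a \<in> A \<Longrightarrow> f a \<in> polyfun) \<Longrightarrow> (\<lambda>x. \<Prod>a\<in>A. f a x) \<in> polyfun"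
  by (induction A rule: finite_induct) (auto intro: pf_const pf_mult)

lemma pf_comp:
  "f \<in> polyfun \<Longrightarrow> (\<And>i. i < 5 \<Longrightarrow> (\<lambda>x. \<phi> x i) \<in> polyfun) \<Longrightarrow> (\<lambda>x. f (\<phi> x)) \<in> polyfun"
  by (induction f rule: polyfun.induct) (auto intro: pf_const pf_add pf_mult)

lemma pf_pow_add_split:
  assumes "u \<in> polyfun" "v \<in> polyfun"
  shows "\<exists>P\<in>polyfun. \<forall>x. (u x + v x) ^ N = u x ^ N + v x * P x"
proof (induction N)
  case 0
  show ?case
    by (intro bexI[of _ "\<lambda>x. 0"]) (auto intro: pf_const)
next
  case (Suc N)
  then obtain P where "P \<in> polyfun" "\<forall>x. (u x + v x) ^ N = u x ^ N + v x * P x"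
    by blast
  then show ?case
    using assms
    by (intro bexI[of _ "\<lambda>x. u x ^ N + P x * u x + P x * v x"])
      (auto simp: algebra_simps intro!: pf_add pf_mult pf_pow)
qed

lemma less_5_cases: "i < (5::nat) \<Longrightarrow> i = 0 \<or> i = 1 \<or> i = 2 \<or> i = 3 \<or> i = 4"
  by auto

lemma gact_polyfun: "i < 5 \<Longrightarrow> (\<lambda>x. gact p q t \<zeta> x i) \<in> polyfun"
  by (drule less_5_cases) (auto simp: gact_def intro!: pf_smult pf_coord)

lemma bact_polyfun: "i < 5 \<Longrightarrow> (\<lambda>x. bact \<alpha> \<beta> x i) \<in> polyfun"
  by (drule less_5_cases) (auto simp: bact_def intro!: pf_add pf_smult pf_coord)

lemma pf_ideal_subset: "is_pf_ideal I \<Longrightarrow> I \<subseteq> polyfun"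
  and pf_ideal_zero: "is_pf_ideal I \<Longrightarrow> (\<lambda>x. 0) \<in> I"
  and pf_ideal_add: "is_pf_ideal I \<Longrightarrow> f \<in> I \<Longrightarrow> g \<in> I \<Longrightarrow> (\<lambda>x. f x + g x) \<in> I"
  and pf_ideal_mult: "is_pf_ideal I \<Longrightarrow> h \<in> polyfun \<Longrightarrow> f \<in> I \<Longrightarrow> (\<lambda>x. h x * f x) \<in> I"
  unfolding is_pf_ideal_def by blast+

lemma pf_ideal_smult: "is_pf_ideal I \<Longrightarrow> f \<in> I \<Longrightarrow> (\<lambda>x. c * f x) \<in> I"
  using pf_ideal_mult[OF _ pf_const] .

lemma pf_ideal_diff: "is_pf_ideal I \<Longrightarrow> f \<in> I \<Longrightarrow> g \<in> I \<Longrightarrow> (\<lambda>x. f x - g x) \<in> I"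
  using pf_ideal_add[OF _ _ pf_ideal_smult[of I g "-1"], of f] by simp

lemma pf_ideal_sum:
  assumes "is_pf_ideal I" "finite A" "\<And>a. a \<in> A \<Longrightarrow> f a \<in> I"
  shows "(\<lambda>x. \<Sum>a\<in>A. f a x) \<in> I"
  using assms(2,3)
  by (induction A rule: finite_induct) (auto intro: pf_ideal_zero[OF assms(1)] pf_ideal_add[OF assms(1)])

lemma fun_mem_cong: "f \<in> I \<Longrightarrow> (\<And>x. f x = g x) \<Longrightarrow> g \<in> I"
  by (metis ext)

lemma pf_ideal_unit_smult:
  "is_pf_ideal I \<Longrightarrow> (\<lambda>x. c * f x) \<in> I \<Longrightarrow> c \<noteq> 0 \<Longrightarrow> f \<in> I"
  by (erule fun_mem_cong[OF pf_ideal_smult[of I _ "inverse c"]]) (simp_all add: field_simps)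

lemma pf_ideal_const_eq_0:
  assumes "is_pf_ideal I" "f \<in> polyfun" "f \<notin> I" "(\<lambda>x. c) \<in> I"
  shows "c = 0"
proof (rule ccontr)
  assume "c \<noteq> 0"
  then have "(\<lambda>x. 1) \<in> I"
    using pf_ideal_unit_smult[of I c "\<lambda>x. 1"] assms(1,4) by simp
  then show False
    using pf_ideal_mult[OF assms(1,2)] assms(3) by fastforce
qed

lemma dim_one_mod_lin_dep:
  assumes I: "is_pf_ideal I" and "dim_one_mod W I" "f \<in> W" "g \<in> W"
  obtains c1 c2 where "c1 \<noteq> 0 \<or> c2 \<noteq> 0" "(\<lambda>x. c1 * f x + c2 * g x) \<in> I"
proof -
  obtain e where e: "\<forall>h\<in>W. \<exists>c. (\<lambda>x. h x - c * e x) \<in> I"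
    using assms(2) unfolding dim_one_mod_def by blast
  obtain cf cg where cf: "(\<lambda>x. f x - cf * e x) \<in> I" and cg: "(\<lambda>x. g x - cg * e x) \<in> I"
    using e assms(3,4) by blast
  show thesis
  proof (cases "cf = 0")
    case True
    then show thesis
      using that[of 1 0] cf by simp
  next
    case False
    have "(\<lambda>x. cg * (f x - cf * e x) - cf * (g x - cg * e x)) \<in> I"
      by (rule pf_ideal_diff[OF I pf_ideal_smult[OF I cf] pf_ideal_smult[OF I cg]])
    then have "(\<lambda>x. cg * f x + (- cf) * g x) \<in> I"
      by (rule fun_mem_cong) (simp add: algebra_simps)
    then show thesis
      using that[of cg "- cf"] False by simp
  qed
qed

lemma pf_ideal_shear:
  assumes I: "is_pf_ideal I" and c: "c1 \<noteq> 0 \<or> c2 \<noteq> 0"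
    and lin: "(\<lambda>x. c1 * f x + c2 * g x) \<in> I" "(\<lambda>x. c1 * f (\<phi> x) + c2 * g (\<phi> x)) \<in> I"
    and \<phi>: "\<And>x. f (\<phi> x) = f x + g x" "\<And>x. g (\<phi> x) = g x"
  shows "g \<in> I"
proof -
  have "(\<lambda>x. (c1 * f (\<phi> x) + c2 * g (\<phi> x)) - (c1 * f x + c2 * g x)) \<in> I"
    by (rule pf_ideal_diff[OF I lin(2,1)])
  then have c1g: "(\<lambda>x. c1 * g x) \<in> I"
    by (rule fun_mem_cong) (simp add: \<phi> algebra_simps)
  show ?thesis
  proof (cases "c1 = 0")
    case False
    then show ?thesis
      using pf_ideal_unit_smult[OF I c1g] by simp
  next
    case True
    then show ?thesis
      using pf_ideal_unit_smult[OF I, of c2 g] c lin(1) by simp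
  qed
qed

lemma pf_ideal_eigen_plus_const:
  assumes I: "is_pf_ideal I" and proper: "f \<in> polyfun" "f \<notin> I"
    and g: "(\<lambda>x. g x + e) \<in> I" "(\<lambda>x. g (\<phi> x) + e) \<in> I"
    and \<phi>: "\<And>x. g (\<phi> x) = c * g x" and "c \<noteq> 1"
  shows "g \<in> I"
proof -
  have "(\<lambda>x. (g (\<phi> x) + e) - c * (g x + e)) \<in> I"
    by (rule pf_ideal_diff[OF I g(2) pf_ideal_smult[OF I g(1)]])
  then have "(\<lambda>x. e * (1 - c)) \<in> I"
    by (rule fun_mem_cong) (simp add: \<phi> algebra_simps)
  then have "e * (1 - c) = 0"
    by (rule pf_ideal_const_eq_0[OF I proper])
  then have "e = 0"
    using \<open>c \<noteq> 1\<close> by simp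
  then show ?thesis
    using g(1) by simp
qed

lemma pf_ideal_gen_is_ideal:
  assumes "set gs \<subseteq> polyfun"
  shows "is_pf_ideal (pf_ideal_gen gs)"
  unfolding is_pf_ideal_def
proof (intro conjI ballI subsetI)
  fix f assume "f \<in> pf_ideal_gen gs"
  then obtain hs where "length hs = length gs" "set hs \<subseteq> polyfun"
      "f = (\<lambda>x. \<Sum>i<length gs. (hs ! i) x * (gs ! i) x)"
    unfolding pf_ideal_gen_def by blast
  then show "f \<in> polyfun"
    using assms by (auto intro!: pf_sum pf_mult)
next
  show "(\<lambda>x. 0) \<in> pf_ideal_gen gs"
    unfolding pf_ideal_gen_def
    by (intro CollectI exI[of _ "replicate (length gs) (\<lambda>x. 0)"]) (auto intro: pf_const)
next
  fix f g assume "f \<in> pf_ideal_gen gs" "g \<in> pf_ideal_gen gs"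
  then obtain hs ks where "length hs = length gs" "set hs \<subseteq> polyfun"
      "f = (\<lambda>x. \<Sum>i<length gs. (hs ! i) x * (gs ! i) x)"
      "length ks = length gs" "set ks \<subseteq> polyfun"
      "g = (\<lambda>x. \<Sum>i<length gs. (ks ! i) x * (gs ! i) x)"
    unfolding pf_ideal_gen_def by blast
  then show "(\<lambda>x. f x + g x) \<in> pf_ideal_gen gs"
    unfolding pf_ideal_gen_def
    by (intro CollectI exI[of _ "map (\<lambda>i x. (hs ! i) x + (ks ! i) x) [0..<length gs]"])
      (auto intro!: pf_add simp: distrib_right sum.distrib)
next
  fix f h assume "f \<in> pf_ideal_gen gs" "h \<in> polyfun"
  then obtain hs where "length hs = length gs" "set hs \<subseteq> polyfun"
      "f = (\<lambda>x. \<Sum>i<length gs. (hs ! i) x * (gs ! i) x)"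
    unfolding pf_ideal_gen_def by blast
  then show "(\<lambda>x. h x * f x) \<in> pf_ideal_gen gs"
    unfolding pf_ideal_gen_def using \<open>h \<in> polyfun\<close>
    by (intro CollectI exI[of _ "map (\<lambda>i x. h x * (hs ! i) x) [0..<length gs]"])
      (auto intro!: pf_mult simp: sum_distrib_left mult.assoc)
qed

lemma pf_ideal_gen_generator:
  assumes "g \<in> set gs"
  shows "g \<in> pf_ideal_gen gs"
proof -
  obtain i where i: "i < length gs" "g = gs ! i"
    using assms by (auto simp: in_set_conv_nth)
  show ?thesis
    unfolding pf_ideal_gen_def
  proof (intro CollectI exI[of _ "map (\<lambda>j x. of_bool (j = i)) [0..<length gs]"] conjI)
    have "{..<length gs} \<inter> {j. j = i} = {i}"
      using i(1) by auto
    then show "g = (\<lambda>x. \<Sum>j<length gs. (map (\<lambda>j x. of_bool (j = i)) [0..<length gs] ! j) x * (gs ! j) x)"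
      by (simp add: i(2))
  qed (auto intro: pf_const)
qed

lemma pf_ideal_gen_least:
  assumes "is_pf_ideal I" "set gs \<subseteq> I"
  shows "pf_ideal_gen gs \<subseteq> I"
proof
  fix f assume "f \<in> pf_ideal_gen gs"
  then obtain hs where "length hs = length gs" "set hs \<subseteq> polyfun"
      "f = (\<lambda>x. \<Sum>i<length gs. (hs ! i) x * (gs ! i) x)"
    unfolding pf_ideal_gen_def by blast
  then show "f \<in> I"
    using assms by (auto intro!: pf_ideal_sum pf_ideal_mult)
qed

lemma pf_ideal_preimage:
  assumes "is_pf_ideal J" and \<phi>: "\<And>i. i < 5 \<Longrightarrow> (\<lambda>x. \<phi> x i) \<in> polyfun"
  shows "is_pf_ideal {f \<in> polyfun. (\<lambda>x. f (\<phi> x)) \<in> J}"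
proof -
  have "(\<lambda>x. h (\<phi> x) * f (\<phi> x)) \<in> J" if "h \<in> polyfun" "(\<lambda>x. f (\<phi> x)) \<in> J" for f h
    using pf_ideal_mult[OF assms(1) pf_comp[OF that(1) \<phi>] that(2)] .
  then show ?thesis
    unfolding is_pf_ideal_def
    using assms(1) by (auto intro: pf_const pf_add pf_mult pf_ideal_zero pf_ideal_add)
qed

lemma pf_ideal_gen_comp_stable:
  assumes "set gs \<subseteq> polyfun" "\<And>i. i < 5 \<Longrightarrow> (\<lambda>x. \<phi> x i) \<in> polyfun"
    and "\<And>g. g \<in> set gs \<Longrightarrow> (\<lambda>x. g (\<phi> x)) \<in> pf_ideal_gen gs"
    and "f \<in> pf_ideal_gen gs"
  shows "(\<lambda>x. f (\<phi> x)) \<in> pf_ideal_gen gs"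
proof -
  have "pf_ideal_gen gs \<subseteq> {f \<in> polyfun. (\<lambda>x. f (\<phi> x)) \<in> pf_ideal_gen gs}"
    using assms(1,3)
    by (intro pf_ideal_gen_least pf_ideal_preimage pf_ideal_gen_is_ideal assms(2)) auto
  then show ?thesis
    using assms(4) by blast
qed

section \<open>Monomials and monomial ideals\<close>

lemma coeff_eq_0_if_sum_powers_eq_0:
  fixes A :: "nat \<Rightarrow> complex"
  assumes "finite K" "\<And>z. (\<Sum>e\<in>K. A e * z ^ e) = 0" "e \<in> K"
  shows "A e = 0"
proof -
  define P where "P = (\<Sum>e\<in>K. monom (A e) e)"
  have "poly P z = 0" for z
    using assms(2) by (simp add: P_def poly_sum poly_monom)
  then have "P = 0"
    using poly_all_0_iff_0 by blast
  moreover have "coeff P e = A e"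
    using assms(1,3) by (simp add: P_def coeff_sum coeff_monom)
  ultimately show ?thesis
    by simp
qed

definition monomial_fun :: "nat \<Rightarrow> (nat \<Rightarrow> nat) \<Rightarrow> pfun" where
  "monomial_fun k \<alpha> x = (\<Prod>i<k. x i ^ \<alpha> i)"

lemma monomial_fun_Suc: "monomial_fun (Suc k) \<alpha> x = monomial_fun k \<alpha> x * x k ^ \<alpha> k"
  by (simp add: monomial_fun_def)

lemma monomial_fun_upd: "k \<le> j \<Longrightarrow> monomial_fun k \<alpha> (x(j := z)) = monomial_fun k \<alpha> x"
  unfolding monomial_fun_def by (intro prod.cong) auto

text \<open>Induction on the number of variables: collecting terms by the degree in the last variable
  turns a vanishing sum into a vanishing univariate polynomial whose coefficients are sums
  in fewer variables.\<close>

lemma monomial_fun_lin_indep: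
  assumes "finite S" "\<forall>\<beta>\<in>S. \<forall>\<gamma>\<in>S. (\<forall>i<k. \<beta> i = \<gamma> i) \<longrightarrow> \<beta> = \<gamma>"
    and "\<And>x. (\<Sum>\<beta>\<in>S. c \<beta> * monomial_fun k \<beta> x) = 0" and "\<alpha> \<in> S"
  shows "c \<alpha> = 0"
  using assms
proof (induction k arbitrary: S)
  case 0
  then have "S = {\<alpha>}"
    by blast
  then show ?case
    using "0.prems"(3) by (simp add: monomial_fun_def)
next
  case (Suc k)
  define A where "A = (\<lambda>x e. \<Sum>\<beta>\<in>{\<beta>\<in>S. \<beta> k = e}. c \<beta> * monomial_fun k \<beta> x)"
  have "(\<Sum>e\<in>(\<lambda>\<beta>. \<beta> k) ` S. A x e * z ^ e) = 0" for x z
  proof -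
    have "(\<Sum>e\<in>(\<lambda>\<beta>. \<beta> k) ` S. A x e * z ^ e)
        = (\<Sum>e\<in>(\<lambda>\<beta>. \<beta> k) ` S. \<Sum>\<beta>\<in>{\<beta>\<in>S. \<beta> k = e}. c \<beta> * monomial_fun k \<beta> x * z ^ \<beta> k)"
      by (intro sum.cong refl) (auto simp: A_def sum_distrib_right)
    also have "\<dots> = (\<Sum>\<beta>\<in>S. c \<beta> * monomial_fun k \<beta> x * z ^ \<beta> k)"
      by (rule sum.image_gen[OF Suc.prems(1), symmetric])
    also have "\<dots> = (\<Sum>\<beta>\<in>S. c \<beta> * monomial_fun (Suc k) \<beta> (x(k := z)))"
      by (simp add: monomial_fun_Suc monomial_fun_upd mult.assoc)
    finally show ?thesis
      using Suc.prems(3) by simp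
  qed
  then have "A x (\<alpha> k) = 0" for x
    using coeff_eq_0_if_sum_powers_eq_0 Suc.prems(1,4) by blast
  moreover have "\<forall>\<beta>\<in>{\<beta>\<in>S. \<beta> k = \<alpha> k}. \<forall>\<gamma>\<in>{\<beta>\<in>S. \<beta> k = \<alpha> k}. (\<forall>i<k. \<beta> i = \<gamma> i) \<longrightarrow> \<beta> = \<gamma>"
    using Suc.prems(2) by (auto simp: less_Suc_eq)
  ultimately show ?case
    using Suc.IH[of "{\<beta>\<in>S. \<beta> k = \<alpha> k}"] Suc.prems(1,4) by (simp add: A_def)
qed

abbreviation mon :: "(nat \<Rightarrow> nat) \<Rightarrow> pfun" where
  "mon \<equiv> monomial_fun 5"

definition exps :: "(nat \<Rightarrow> nat) set" where
  "exps = {\<alpha>. \<forall>i\<ge>5. \<alpha> i = 0}"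

lemma mon_lin_indep:
  assumes "finite S" "S \<subseteq> exps" "\<And>x. (\<Sum>\<beta>\<in>S. c \<beta> * mon \<beta> x) = 0" "\<alpha> \<in> S"
  shows "c \<alpha> = 0"
proof (rule monomial_fun_lin_indep[OF assms(1) _ assms(3,4)])
  show "\<forall>\<beta>\<in>S. \<forall>\<gamma>\<in>S. (\<forall>i<5. \<beta> i = \<gamma> i) \<longrightarrow> \<beta> = \<gamma>"
  proof (intro ballI impI ext)
    fix \<beta> \<gamma> i assume "\<beta> \<in> S" "\<gamma> \<in> S" "\<forall>i<5. \<beta> i = \<gamma> i"
    moreover have "\<beta> i = 0" "\<gamma> i = 0" if "\<not> i < 5"
      using that \<open>\<beta> \<in> S\<close> \<open>\<gamma> \<in> S\<close> assms(2) by (auto simp: exps_def)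
    ultimately show "\<beta> i = \<gamma> i"
      by (cases "i < 5") auto
  qed
qed

lemma mon_add: "mon (\<alpha> + \<beta>) x = mon \<alpha> x * mon \<beta> x"
  by (simp add: monomial_fun_def power_add prod.distrib)

lemma mon_polyfun: "mon \<alpha> \<in> polyfun"
  unfolding monomial_fun_def by (intro pf_prod pf_pow pf_coord) auto

lemma mon_eq: "mon \<alpha> x = x 0 ^ \<alpha> 0 * x 1 ^ \<alpha> 1 * x 2 ^ \<alpha> 2 * x 3 ^ \<alpha> 3 * x 4 ^ \<alpha> 4"
  by (simp add: monomial_fun_def numeral_eq_Suc lessThan_Suc mult_ac)

lemma mon_single: "i < 5 \<Longrightarrow> mon (0(i := n)) x = x i ^ n"
  by (drule less_5_cases) (auto simp: mon_eq)

lemma exps_add: "\<alpha> \<in> exps \<Longrightarrow> \<beta> \<in> exps \<Longrightarrow> \<alpha> + \<beta> \<in> exps"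
  by (simp add: exps_def)

definition mon_span :: "(nat \<Rightarrow> nat) set \<Rightarrow> pfun set" where
  "mon_span P = {f. \<exists>S c. finite S \<and> S \<subseteq> P \<and> f = (\<lambda>x. \<Sum>\<alpha>\<in>S. c \<alpha> * mon \<alpha> x)}"

lemma mon_spanI: "finite S \<Longrightarrow> S \<subseteq> P \<Longrightarrow> (\<lambda>x. \<Sum>\<alpha>\<in>S. c \<alpha> * mon \<alpha> x) \<in> mon_span P"
  unfolding mon_span_def by blast

lemma mon_span_mono: "P \<subseteq> Q \<Longrightarrow> mon_span P \<subseteq> mon_span Q"
  unfolding mon_span_def by blast

lemma mon_in_mon_span: "\<alpha> \<in> P \<Longrightarrow> mon \<alpha> \<in> mon_span P"
  using mon_spanI[of "{\<alpha>}" P "\<lambda>_. 1"] by simp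

lemma mon_span_subset_polyfun: "mon_span P \<subseteq> polyfun"
  unfolding mon_span_def by (auto intro!: pf_sum pf_smult mon_polyfun)

lemma mon_span_add:
  assumes "f \<in> mon_span P" "g \<in> mon_span P"
  shows "(\<lambda>x. f x + g x) \<in> mon_span P"
proof -
  obtain S c T d where ST: "finite S" "S \<subseteq> P" "f = (\<lambda>x. \<Sum>\<alpha>\<in>S. c \<alpha> * mon \<alpha> x)"
      "finite T" "T \<subseteq> P" "g = (\<lambda>x. \<Sum>\<alpha>\<in>T. d \<alpha> * mon \<alpha> x)"
    using assms unfolding mon_span_def by blast
  define e where "e \<alpha> = (if \<alpha> \<in> S then c \<alpha> else 0) + (if \<alpha> \<in> T then d \<alpha> else 0)" for \<alpha>
  have "f x + g x = (\<Sum>\<alpha>\<in>S \<union> T. e \<alpha> * mon \<alpha> x)" for x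
  proof -
    have "f x = (\<Sum>\<alpha>\<in>S \<union> T. (if \<alpha> \<in> S then c \<alpha> else 0) * mon \<alpha> x)"
      unfolding ST(3) using ST(1,4) by (intro sum.mono_neutral_cong_left) auto
    moreover have "g x = (\<Sum>\<alpha>\<in>S \<union> T. (if \<alpha> \<in> T then d \<alpha> else 0) * mon \<alpha> x)"
      unfolding ST(6) using ST(1,4) by (intro sum.mono_neutral_cong_left) auto
    ultimately show ?thesis
      by (simp add: e_def distrib_right sum.distrib)
  qed
  then show ?thesis
    using mon_spanI[of "S \<union> T" P e] ST(1,2,4,5) by auto
qed

lemma mon_span_mult:
  assumes "f \<in> mon_span P" "g \<in> mon_span Q"
  shows "(\<lambda>x. f x * g x) \<in> mon_span {\<alpha> + \<beta> |\<alpha> \<beta>. \<alpha> \<in> P \<and> \<beta> \<in> Q}"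
proof -
  obtain S c T d where ST: "finite S" "S \<subseteq> P" "f = (\<lambda>x. \<Sum>\<alpha>\<in>S. c \<alpha> * mon \<alpha> x)"
      "finite T" "T \<subseteq> Q" "g = (\<lambda>x. \<Sum>\<alpha>\<in>T. d \<alpha> * mon \<alpha> x)"
    using assms unfolding mon_span_def by blast
  define U where "U = (\<lambda>(\<alpha>, \<beta>). \<alpha> + \<beta>) ` (S \<times> T)"
  define e where "e \<gamma> = (\<Sum>(\<alpha>, \<beta>)\<in>{z \<in> S \<times> T. (\<lambda>(\<alpha>, \<beta>). \<alpha> + \<beta>) z = \<gamma>}. c \<alpha> * d \<beta>)" for \<gamma>
  have "f x * g x = (\<Sum>\<gamma>\<in>U. e \<gamma> * mon \<gamma> x)" for x
  proof -
    have "f x * g x = (\<Sum>(\<alpha>, \<beta>)\<in>S \<times> T. c \<alpha> * d \<beta> * mon (\<alpha> + \<beta>) x)"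
      unfolding ST(3,6) sum_product sum.cartesian_product mon_add by (simp add: algebra_simps)
    also have "\<dots> = (\<Sum>\<gamma>\<in>U. \<Sum>z\<in>{z \<in> S \<times> T. (\<lambda>(\<alpha>, \<beta>). \<alpha> + \<beta>) z = \<gamma>}.
        (\<lambda>(\<alpha>, \<beta>). c \<alpha> * d \<beta> * mon (\<alpha> + \<beta>) x) z)"
      unfolding U_def using ST(1,4) by (intro sum.image_gen) simp
    also have "\<dots> = (\<Sum>\<gamma>\<in>U. e \<gamma> * mon \<gamma> x)"
      unfolding e_def sum_distrib_right by (intro sum.cong refl) auto
    finally show ?thesis .
  qed
  moreover have "finite U" "U \<subseteq> {\<alpha> + \<beta> |\<alpha> \<beta>. \<alpha> \<in> P \<and> \<beta> \<in> Q}"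
    using ST by (auto simp: U_def)
  ultimately show ?thesis
    using mon_spanI[of U _ e] by simp
qed

lemma polyfun_subset_mon_span: "polyfun \<subseteq> mon_span exps"
proof
  fix f assume "f \<in> polyfun"
  then show "f \<in> mon_span exps"
  proof (induction f rule: polyfun.induct)
    case (pf_const c)
    have "mon 0 x = 1" for x
      by (simp add: monomial_fun_def)
    then show ?case
      using mon_spanI[of "{0}" exps "\<lambda>_. c"] by (simp add: exps_def)
  next
    case (pf_coord i)
    then have "mon (0(i := 1)) = (\<lambda>x. x i)" "0(i := 1) \<in> exps"
      by (simp_all add: fun_eq_iff mon_single exps_def)
    then show ?case
      by (metis mon_in_mon_span)
  next
    case (pf_add f g)
    show ?case
      using pf_add.IH by (rule mon_span_add)
  next
    case (pf_mult f g)
    have "{\<alpha> + \<beta> |\<alpha> \<beta>. \<alpha> \<in> exps \<and> \<beta> \<in> exps} \<subseteq> exps"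
      using exps_add by blast
    then show ?case
      using mon_span_mult[OF pf_mult.IH] mon_span_mono by blast
  qed
qed

lemma mon_notin_mon_span:
  assumes "P \<subseteq> exps" "\<alpha> \<in> exps" "\<alpha> \<notin> P"
  shows "mon \<alpha> \<notin> mon_span P"
proof
  assume "mon \<alpha> \<in> mon_span P"
  then obtain S c where S: "finite S" "S \<subseteq> P" "mon \<alpha> = (\<lambda>x. \<Sum>\<beta>\<in>S. c \<beta> * mon \<beta> x)"
    unfolding mon_span_def mem_Collect_eq by (elim exE conjE) (rule that; assumption)
  have "\<alpha> \<notin> S"
    using S(2) assms(3) by blast
  have sum_eq_0: "(\<Sum>\<beta>\<in>insert \<alpha> S. (c(\<alpha> := -1)) \<beta> * mon \<beta> x) = 0" for x
  proof -
    have "(\<Sum>\<beta>\<in>S. (c(\<alpha> := -1)) \<beta> * mon \<beta> x) = (\<Sum>\<beta>\<in>S. c \<beta> * mon \<beta> x)"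
      by (intro sum.cong refl) (use \<open>\<alpha> \<notin> S\<close> in auto)
    also have "\<dots> = mon \<alpha> x"
      using fun_cong[OF S(3), of x] by simp
    finally show ?thesis
      using \<open>\<alpha> \<notin> S\<close> S(1) by simp
  qed
  have "insert \<alpha> S \<subseteq> exps"
    using S(2) assms(1,2) by blast
  with S(1) have "(c(\<alpha> := -1)) \<alpha> = 0"
    by (intro mon_lin_indep[OF _ _ sum_eq_0]) simp_all
  then show False
    by simp
qed

lemma mon_span_is_ideal:
  assumes "\<And>\<alpha> \<beta>. \<alpha> \<in> exps \<Longrightarrow> \<beta> \<in> P \<Longrightarrow> \<alpha> + \<beta> \<in> P"
  shows "is_pf_ideal (mon_span P)"
  unfolding is_pf_ideal_def
proof (intro conjI ballI mon_span_subset_polyfun)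
  show "(\<lambda>x. 0) \<in> mon_span P"
    using mon_spanI[of "{}" P] by simp
next
  fix f g assume "f \<in> mon_span P" "g \<in> mon_span P"
  then show "(\<lambda>x. f x + g x) \<in> mon_span P"
    by (rule mon_span_add)
next
  fix f h assume "f \<in> mon_span P" "h \<in> polyfun"
  then have "(\<lambda>x. h x * f x) \<in> mon_span {\<alpha> + \<beta> |\<alpha> \<beta>. \<alpha> \<in> exps \<and> \<beta> \<in> P}"
    using polyfun_subset_mon_span mon_span_mult by blast
  moreover have "{\<alpha> + \<beta> |\<alpha> \<beta>. \<alpha> \<in> exps \<and> \<beta> \<in> P} \<subseteq> P"
    using assms by blast
  ultimately show "(\<lambda>x. h x * f x) \<in> mon_span P"
    using mon_span_mono by blast
qed

lemma monomial_ideal_is_ideal: "is_pf_ideal (pf_ideal_gen (map mon \<gamma>s))"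
  by (rule pf_ideal_gen_is_ideal) (auto intro: mon_polyfun)

lemma mon_in_monomial_ideal:
  assumes "\<gamma> \<in> set \<gamma>s" "\<gamma> \<le> \<alpha>"
  shows "mon \<alpha> \<in> pf_ideal_gen (map mon \<gamma>s)"
proof -
  have "(\<alpha> - \<gamma>) + \<gamma> = \<alpha>"
    using assms(2) by (simp add: le_fun_def fun_eq_iff)
  then have "mon \<alpha> = (\<lambda>x. mon (\<alpha> - \<gamma>) x * mon \<gamma> x)"
    by (metis mon_add)
  then show ?thesis
    using pf_ideal_mult[OF monomial_ideal_is_ideal mon_polyfun pf_ideal_gen_generator] assms(1)
    by simp
qed

lemma mon_in_monomial_ideal_iff:
  assumes "set \<gamma>s \<subseteq> exps" "\<alpha> \<in> exps"
  shows "mon \<alpha> \<in> pf_ideal_gen (map mon \<gamma>s) \<longleftrightarrow> (\<exists>\<gamma>\<in>set \<gamma>s. \<gamma> \<le> \<alpha>)"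
proof
  define P where "P = {\<beta> \<in> exps. \<exists>\<gamma>\<in>set \<gamma>s. \<gamma> \<le> \<beta>}"
  have "pf_ideal_gen (map mon \<gamma>s) \<subseteq> mon_span P"
  proof (rule pf_ideal_gen_least[OF mon_span_is_ideal])
    show "\<beta> + \<delta> \<in> P" if "\<beta> \<in> exps" "\<delta> \<in> P" for \<beta> \<delta>
    proof -
      obtain \<gamma> where "\<gamma> \<in> set \<gamma>s" "\<gamma> \<le> \<delta>"
        using \<open>\<delta> \<in> P\<close> by (auto simp: P_def)
      moreover have "\<delta> \<le> \<beta> + \<delta>"
        by (simp add: le_fun_def)
      ultimately show ?thesis
        using that exps_add by (auto simp: P_def intro: order_trans)
    qed
    show "set (map mon \<gamma>s) \<subseteq> mon_span P"
      using assms(1) by (auto simp: P_def intro!: mon_in_mon_span)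
  qed
  moreover assume "mon \<alpha> \<in> pf_ideal_gen (map mon \<gamma>s)"
  ultimately have "mon \<alpha> \<in> mon_span P"
    by blast
  then show "\<exists>\<gamma>\<in>set \<gamma>s. \<gamma> \<le> \<alpha>"
    using mon_notin_mon_span[of P \<alpha>] assms(2) by (auto simp: P_def)
qed (auto intro: mon_in_monomial_ideal)

lemma monomial_ideal_normal_form:
  assumes "f \<in> polyfun"
  obtains S c where "finite S" "S \<subseteq> {\<alpha> \<in> exps. \<not> (\<exists>\<gamma>\<in>set \<gamma>s. \<gamma> \<le> \<alpha>)}"
    and "(\<lambda>x. f x - (\<Sum>\<alpha>\<in>S. c \<alpha> * mon \<alpha> x)) \<in> pf_ideal_gen (map mon \<gamma>s)"
proof -
  obtain S0 c where S0: "finite S0" "S0 \<subseteq> exps" "f = (\<lambda>x. \<Sum>\<alpha>\<in>S0. c \<alpha> * mon \<alpha> x)"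
    using assms polyfun_subset_mon_span unfolding mon_span_def by blast
  define S where "S = {\<alpha> \<in> S0. \<not> (\<exists>\<gamma>\<in>set \<gamma>s. \<gamma> \<le> \<alpha>)}"
  have "(\<lambda>x. \<Sum>\<alpha>\<in>S0 - S. c \<alpha> * mon \<alpha> x) \<in> pf_ideal_gen (map mon \<gamma>s)"
    using S0(1) by (intro pf_ideal_sum pf_ideal_smult monomial_ideal_is_ideal)
      (auto simp: S_def intro: mon_in_monomial_ideal)
  moreover have "(\<Sum>\<alpha>\<in>S0 - S. c \<alpha> * mon \<alpha> x) = f x - (\<Sum>\<alpha>\<in>S. c \<alpha> * mon \<alpha> x)" for x
    using S0 by (simp add: sum_diff S_def)
  ultimately have "(\<lambda>x. f x - (\<Sum>\<alpha>\<in>S. c \<alpha> * mon \<alpha> x)) \<in> pf_ideal_gen (map mon \<gamma>s)"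
    by (rule fun_mem_cong)
  moreover have "finite S" "S \<subseteq> {\<alpha> \<in> exps. \<not> (\<exists>\<gamma>\<in>set \<gamma>s. \<gamma> \<le> \<alpha>)}"
    using S0(1,2) by (auto simp: S_def)
  ultimately show thesis
    using that by blast
qed

section \<open>The ideal \<open>J0\<close>\<close>

definition J0_exps :: "nat \<Rightarrow> nat \<Rightarrow> nat \<Rightarrow> (nat \<Rightarrow> nat) list" where
  "J0_exps p q a = [0(0 := q - p), 0(2 := 1), 0(4 := 1), 0(1 := a * q, 3 := a * p)]"

lemma J0_exps_subset_exps: "set (J0_exps p q a) \<subseteq> exps"
  by (auto simp: J0_exps_def exps_def)

lemma J0_eq_monomial_ideal: "J0 p q a = pf_ideal_gen (map mon (J0_exps p q a))"
  unfolding J0_def J0_exps_def by (rule arg_cong[where f = pf_ideal_gen]) (simp add: fun_eq_iff mon_eq)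

lemma J0_is_ideal: "is_pf_ideal (J0 p q a)"
  unfolding J0_eq_monomial_ideal by (rule monomial_ideal_is_ideal)

lemma J0_generators:
  "(\<lambda>x. x 0 ^ (q - p)) \<in> J0 p q a" "(\<lambda>x. x 2) \<in> J0 p q a" "(\<lambda>x. x 4) \<in> J0 p q a"
  "(\<lambda>x. x 1 ^ (a * q) * x 3 ^ (a * p)) \<in> J0 p q a"
  unfolding J0_def by (simp_all add: pf_ideal_gen_generator)

lemma J0_comp_stable:
  assumes "\<And>i. i < 5 \<Longrightarrow> (\<lambda>x. \<phi> x i) \<in> polyfun"
    and "\<And>\<gamma>. \<gamma> \<in> set (J0_exps p q a) \<Longrightarrow> (\<lambda>x. mon \<gamma> (\<phi> x)) \<in> J0 p q a"
    and "f \<in> J0 p q a"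
  shows "(\<lambda>x. f (\<phi> x)) \<in> J0 p q a"
  using pf_ideal_gen_comp_stable[of "map mon (J0_exps p q a)" \<phi> f] assms
  unfolding J0_eq_monomial_ideal by (auto intro: mon_polyfun)

lemma mon_gact:
  "mon \<alpha> (gact p q t \<zeta> x)
    = (t ^ \<alpha> 0 * inverse (t ^ p * \<zeta>) ^ (\<alpha> 1 + \<alpha> 2) * (t ^ q * \<zeta>) ^ (\<alpha> 3 + \<alpha> 4)) * mon \<alpha> x"
  by (simp add: mon_eq gact_def power_mult_distrib power_add mult_ac)

lemma J0_gact_stable: "f \<in> J0 p q a \<Longrightarrow> (\<lambda>x. f (gact p q t \<zeta> x)) \<in> J0 p q a"
proof (rule J0_comp_stable[OF gact_polyfun])
  fix \<gamma> assume "\<gamma> \<in> set (J0_exps p q a)"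
  then have "mon \<gamma> \<in> J0 p q a"
    unfolding J0_eq_monomial_ideal by (auto intro: mon_in_monomial_ideal)
  then show "(\<lambda>x. mon \<gamma> (gact p q t \<zeta> x)) \<in> J0 p q a"
    unfolding mon_gact by (rule pf_ideal_smult[OF J0_is_ideal])
qed

text \<open>Modulo \<open>X\<^sub>2, X\<^sub>4\<close> the Borel element acts on \<open>X\<^sub>1, X\<^sub>3\<close> by the scalar \<open>\<alpha>\<close>.\<close>

lemma bact_X1_X3_monomial_in_J0:
  "(\<lambda>x. (\<alpha> * x 1 + \<beta> * x 2) ^ (a * q) * (\<alpha> * x 3 + \<beta> * x 4) ^ (a * p)) \<in> J0 p q a"
proof -
  have lin: "(\<lambda>x. \<alpha> * x 1) \<in> polyfun" "(\<lambda>x. \<beta> * x 2) \<in> polyfun"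
    "(\<lambda>x. \<alpha> * x 3) \<in> polyfun" "(\<lambda>x. \<beta> * x 4) \<in> polyfun"
    by (simp_all add: pf_smult pf_coord)
  obtain P1 where P1: "P1 \<in> polyfun"
      "\<forall>x. (\<alpha> * x 1 + \<beta> * x 2) ^ (a * q) = (\<alpha> * x 1) ^ (a * q) + (\<beta> * x 2) * P1 x"
    using pf_pow_add_split[OF lin(1,2), of "a * q"] by auto
  obtain P3 where P3: "P3 \<in> polyfun"
      "\<forall>x. (\<alpha> * x 3 + \<beta> * x 4) ^ (a * p) = (\<alpha> * x 3) ^ (a * p) + (\<beta> * x 4) * P3 x"
    using pf_pow_add_split[OF lin(3,4), of "a * p"] by auto
  have eq: "(\<alpha> * x 1 + \<beta> * x 2) ^ (a * q) * (\<alpha> * x 3 + \<beta> * x 4) ^ (a * p)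
      = \<alpha> ^ (a * q + a * p) * (x 1 ^ (a * q) * x 3 ^ (a * p))
        + (\<beta> * P1 x * (\<alpha> * x 3 + \<beta> * x 4) ^ (a * p)) * x 2
        + (\<beta> * (\<alpha> * x 1) ^ (a * q) * P3 x) * x 4" for x
    using P1(2) P3(2) by (simp add: power_mult_distrib power_add algebra_simps)
  have "(\<lambda>x. \<alpha> ^ (a * q + a * p) * (x 1 ^ (a * q) * x 3 ^ (a * p))
        + (\<beta> * P1 x * (\<alpha> * x 3 + \<beta> * x 4) ^ (a * p)) * x 2
        + (\<beta> * (\<alpha> * x 1) ^ (a * q) * P3 x) * x 4) \<in> J0 p q a"
  proof (intro pf_ideal_add[OF J0_is_ideal])
    show "(\<lambda>x. \<alpha> ^ (a * q + a * p) * (x 1 ^ (a * q) * x 3 ^ (a * p))) \<in> J0 p q a"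
      by (rule pf_ideal_smult[OF J0_is_ideal J0_generators(4)])
    show "(\<lambda>x. (\<beta> * P1 x * (\<alpha> * x 3 + \<beta> * x 4) ^ (a * p)) * x 2) \<in> J0 p q a"
      using P1(1) by (intro pf_ideal_mult[OF J0_is_ideal _ J0_generators(2)])
        (auto intro!: pf_mult pf_smult pf_pow pf_add pf_coord)
    show "(\<lambda>x. (\<beta> * (\<alpha> * x 1) ^ (a * q) * P3 x) * x 4) \<in> J0 p q a"
      using P3(1) by (intro pf_ideal_mult[OF J0_is_ideal _ J0_generators(3)])
        (auto intro!: pf_mult pf_smult pf_pow pf_add pf_coord)
  qed
  then show ?thesis
    by (rule fun_mem_cong) (rule eq[symmetric])
qed

lemma J0_bact_stable: "f \<in> J0 p q a \<Longrightarrow> (\<lambda>x. f (bact \<alpha> \<beta> x)) \<in> J0 p q a"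
proof (rule J0_comp_stable[OF bact_polyfun])
  fix \<gamma> assume "\<gamma> \<in> set (J0_exps p q a)"
  then consider "\<gamma> = 0(0 := q - p)" | "\<gamma> = 0(2 := 1)" | "\<gamma> = 0(4 := 1)"
    | "\<gamma> = 0(1 := a * q, 3 := a * p)"
    by (auto simp: J0_exps_def)
  then show "(\<lambda>x. mon \<gamma> (bact \<alpha> \<beta> x)) \<in> J0 p q a"
  proof cases
    case 1
    then show ?thesis
      using J0_generators(1) by (simp add: mon_single bact_def)
  next
    case 2
    then show ?thesis
      using pf_ideal_smult[OF J0_is_ideal J0_generators(2)] by (simp add: mon_single bact_def)
  next
    case 3
    then show ?thesis
      using pf_ideal_smult[OF J0_is_ideal J0_generators(3)] by (simp add: mon_single bact_def)
  next
    case 4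
    then show ?thesis
      using bact_X1_X3_monomial_in_J0 by (simp add: mon_eq bact_def mult.commute)
  qed
qed

definition std_exp :: "nat \<Rightarrow> nat \<Rightarrow> nat \<Rightarrow> (nat \<Rightarrow> nat) \<Rightarrow> bool" where
  "std_exp p q a \<alpha> \<longleftrightarrow> \<alpha> \<in> exps \<and> \<alpha> 2 = 0 \<and> \<alpha> 4 = 0 \<and> \<alpha> 0 < q - p
    \<and> \<not> (a * q \<le> \<alpha> 1 \<and> a * p \<le> \<alpha> 3)"

lemma fun_upd_zero_le_iff: "(0(i := n) :: nat \<Rightarrow> nat) \<le> \<alpha> \<longleftrightarrow> n \<le> \<alpha> i"
proof
  assume "0(i := n) \<le> \<alpha>"
  then show "n \<le> \<alpha> i"
    using le_funD[of "0(i := n)" \<alpha> i] by simp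
qed (simp add: le_fun_def)

lemma fun_upd2_zero_le_iff:
  assumes "i \<noteq> j"
  shows "(0(i := n, j := k) :: nat \<Rightarrow> nat) \<le> \<alpha> \<longleftrightarrow> n \<le> \<alpha> i \<and> k \<le> \<alpha> j"
proof
  assume "0(i := n, j := k) \<le> \<alpha>"
  then show "n \<le> \<alpha> i \<and> k \<le> \<alpha> j"
    using le_funD[of "0(i := n, j := k)" \<alpha> i] le_funD[of "0(i := n, j := k)" \<alpha> j] assms by simp
qed (simp add: le_fun_def)

lemma std_exp_iff_not_divisible:
  "\<alpha> \<in> exps \<Longrightarrow> std_exp p q a \<alpha> \<longleftrightarrow> \<not> (\<exists>\<gamma>\<in>set (J0_exps p q a). \<gamma> \<le> \<alpha>)"
  by (auto simp: std_exp_def J0_exps_def fun_upd_zero_le_iff fun_upd2_zero_le_iff)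

lemma mon_in_J0_iff: "\<alpha> \<in> exps \<Longrightarrow> mon \<alpha> \<in> J0 p q a \<longleftrightarrow> \<not> std_exp p q a \<alpha>"
  using mon_in_monomial_ideal_iff[OF J0_exps_subset_exps, of \<alpha>] std_exp_iff_not_divisible[of \<alpha>]
  by (simp add: J0_eq_monomial_ideal)

lemma J0_normal_form:
  assumes "f \<in> polyfun"
  obtains S c where "finite S" "\<forall>\<alpha>\<in>S. std_exp p q a \<alpha>"
    and "(\<lambda>x. f x - (\<Sum>\<alpha>\<in>S. c \<alpha> * mon \<alpha> x)) \<in> J0 p q a"
proof -
  obtain S c where S: "finite S" "S \<subseteq> {\<alpha> \<in> exps. \<not> (\<exists>\<gamma>\<in>set (J0_exps p q a). \<gamma> \<le> \<alpha>)}"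
      "(\<lambda>x. f x - (\<Sum>\<alpha>\<in>S. c \<alpha> * mon \<alpha> x)) \<in> J0 p q a"
    unfolding J0_eq_monomial_ideal by (rule monomial_ideal_normal_form[OF assms])
  moreover have "\<forall>\<alpha>\<in>S. std_exp p q a \<alpha>"
    using S(2) by (auto simp: std_exp_iff_not_divisible)
  ultimately show thesis
    using that by blast
qed

lemma H_eq_in_J0: "H_eq p q \<in> J0 p q a"
proof -
  have "(\<lambda>x. x 3 * x 2) \<in> J0 p q a" "(\<lambda>x. x 1 * x 4) \<in> J0 p q a"
    using pf_ideal_mult[OF J0_is_ideal pf_coord J0_generators(2), of 3]
      pf_ideal_mult[OF J0_is_ideal pf_coord J0_generators(3), of 1] by simp_all
  then have "(\<lambda>x. x 0 ^ (q - p) + (x 3 * x 2 - x 1 * x 4)) \<in> J0 p q a"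
    by (intro pf_ideal_add[OF J0_is_ideal J0_generators(1)] pf_ideal_diff[OF J0_is_ideal])
  then show ?thesis
    by (rule fun_mem_cong) (simp add: H_eq_def algebra_simps)
qed

lemma B_stable_J0: "B_stable (J0 p q a)"
  unfolding B_stable_def using J0_bact_stable by blast

section \<open>Weights of the torus action\<close>

definition deg_t :: "nat \<Rightarrow> nat \<Rightarrow> (nat \<Rightarrow> nat) \<Rightarrow> int" where
  "deg_t p q \<alpha> = int (\<alpha> 0) - int p * int (\<alpha> 1 + \<alpha> 2) + int q * int (\<alpha> 3 + \<alpha> 4)"

definition deg_zeta :: "(nat \<Rightarrow> nat) \<Rightarrow> int" where
  "deg_zeta \<alpha> = int (\<alpha> 3 + \<alpha> 4) - int (\<alpha> 1 + \<alpha> 2)"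

lemma mon_gact_chi:
  assumes "t \<noteq> 0" "\<zeta> \<noteq> 0"
  shows "mon \<alpha> (gact p q t \<zeta> x) = chi (deg_t p q \<alpha>) (deg_zeta \<alpha>) t \<zeta> * mon \<alpha> x"
proof -
  have "chi (deg_t p q \<alpha>) (deg_zeta \<alpha>) t \<zeta>
      = t powi int (\<alpha> 0) / t powi int (p * (\<alpha> 1 + \<alpha> 2)) * t powi int (q * (\<alpha> 3 + \<alpha> 4))
        * (\<zeta> powi int (\<alpha> 3 + \<alpha> 4) / \<zeta> powi int (\<alpha> 1 + \<alpha> 2))"
    unfolding chi_def deg_t_def deg_zeta_def using assms
    by (simp add: power_int_add power_int_diff)
  also have "\<dots> = t ^ \<alpha> 0 / t ^ (p * (\<alpha> 1 + \<alpha> 2)) * t ^ (q * (\<alpha> 3 + \<alpha> 4))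
        * (\<zeta> ^ (\<alpha> 3 + \<alpha> 4) / \<zeta> ^ (\<alpha> 1 + \<alpha> 2))"
    by (simp only: power_int_of_nat)
  also have "\<dots> = t ^ \<alpha> 0 * inverse (t ^ p * \<zeta>) ^ (\<alpha> 1 + \<alpha> 2) * (t ^ q * \<zeta>) ^ (\<alpha> 3 + \<alpha> 4)"
    using assms by (simp add: power_mult[symmetric] power_mult_distrib field_simps power_inverse)
  finally show ?thesis
    by (simp add: mon_gact)
qed

lemma Ggrp_nonzero: "0 < m \<Longrightarrow> (t, \<zeta>) \<in> Ggrp m \<Longrightarrow> t \<noteq> 0 \<and> \<zeta> \<noteq> 0"
  unfolding Ggrp_def by (auto simp: power_0_left)

lemma two_powi_inj: "(2::complex) powi n = 2 powi n' \<Longrightarrow> n = n'"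
proof -
  assume "(2::complex) powi n = 2 powi n'"
  then have "(2::real) powi n = 2 powi n'"
    by (metis of_real_eq_of_real_power_int_cancel_iff of_real_numeral)
  then show "n = n'"
    using power_int_strict_increasing[of n n' "2::real"] power_int_strict_increasing[of n' n "2::real"]
    by (cases n n' rule: linorder_cases) auto
qed

lemma root_of_unity_powi_eq_imp_dvd:
  assumes "0 < m" "cis (2 * pi / m) powi d = cis (2 * pi / m) powi d'"
  shows "int m dvd d - d'"
proof -
  have "cis (of_int d * (2 * pi / m)) / cis (of_int d' * (2 * pi / m)) = 1"
    using assms(2) unfolding cis_power_int by simp
  then have "cis (of_int (d - d') * (2 * pi / m)) = 1"
    using assms(1) unfolding cis_divide by (simp add: field_simps)
  then have "cos (of_int (d - d') * (2 * pi / m)) = 1"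
    by (metis cis.sel(1) one_complex.sel(1))
  then obtain k :: int where k: "of_int (d - d') * (2 * pi / m) = of_int k * 2 * pi"
    using cos_one_2pi_int by blast
  have "real_of_int (d - d') * (2 * pi) = (real_of_int (d - d') * (2 * pi / m)) * m"
    using assms(1) by simp
  also have "\<dots> = real_of_int (k * int m) * (2 * pi)"
    unfolding k by (simp add: mult_ac)
  finally have "real_of_int (d - d') = real_of_int (k * int m)"
    by simp
  then show ?thesis
    by (simp only: of_int_eq_iff) simp
qed

lemma chi_eq_on_Ggrp_iff:
  assumes "0 < m"
  shows "(\<forall>(t, \<zeta>)\<in>Ggrp m. chi n d t \<zeta> = chi n' d' t \<zeta>) \<longleftrightarrow> n = n' \<and> int m dvd d - d'"
proof
  assume H: "\<forall>(t, \<zeta>)\<in>Ggrp m. chi n d t \<zeta> = chi n' d' t \<zeta>"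
  have "(2, 1) \<in> Ggrp m"
    by (simp add: Ggrp_def)
  then have "n = n'"
    using H two_powi_inj by (auto simp: chi_def)
  have "cis (2 * pi / m) ^ m = 1"
    unfolding DeMoivre using assms by simp
  then have "(1, cis (2 * pi / m)) \<in> Ggrp m"
    by (simp add: Ggrp_def)
  then have "int m dvd d - d'"
    using H root_of_unity_powi_eq_imp_dvd[OF assms] by (auto simp: chi_def)
  with \<open>n = n'\<close> show "n = n' \<and> int m dvd d - d'" ..
next
  assume nd: "n = n' \<and> int m dvd d - d'"
  show "\<forall>(t, \<zeta>)\<in>Ggrp m. chi n d t \<zeta> = chi n' d' t \<zeta>"
  proof clarify
    fix t \<zeta> assume "(t, \<zeta>) \<in> Ggrp m"
    then have \<zeta>: "\<zeta> ^ m = 1" "\<zeta> \<noteq> 0"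
      using assms by (auto simp: Ggrp_def power_0_left)
    obtain k where k: "d = d' + int m * k"
      using nd by (metis add_diff_cancel_left' diff_add_cancel dvd_def)
    have "\<zeta> powi d = \<zeta> powi d' * (\<zeta> powi int m) powi k"
      unfolding k using \<zeta>(2) by (simp add: power_int_add power_int_mult)
    then show "chi n d t \<zeta> = chi n' d' t \<zeta>"
      using nd \<zeta>(1) by (simp add: chi_def)
  qed
qed

definition eigenfun :: "('g \<Rightarrow> pt \<Rightarrow> pt) \<Rightarrow> 'g set \<Rightarrow> ('g \<Rightarrow> complex) \<Rightarrow> pfun \<Rightarrow> bool" where
  "eigenfun act \<Gamma> \<chi> h \<longleftrightarrow> (\<forall>g\<in>\<Gamma>. \<forall>x. h (act g x) = \<chi> g * h x)"

lemma eigenfun_smult: "eigenfun act \<Gamma> \<chi> h \<Longrightarrow> eigenfun act \<Gamma> \<chi> (\<lambda>x. c * h x)"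
  unfolding eigenfun_def by simp

lemma eigenfun_sum_twist:
  assumes "\<forall>k\<in>F. eigenfun act \<Gamma> (\<chi> k) (h k)" "g \<in> \<Gamma>"
  shows "(\<Sum>k\<in>F. h k (act g x)) - c * (\<Sum>k\<in>F. h k x) = (\<Sum>k\<in>F. (\<chi> k g - c) * h k x)"
proof -
  have "h k (act g x) = \<chi> k g * h k x" if "k \<in> F" for k
    using assms that unfolding eigenfun_def by blast
  then show ?thesis
    by (simp add: sum_distrib_left sum_subtractf[symmetric] algebra_simps)
qed

text \<open>The induction step applies \<open>f \<mapsto> f \<circ> act g - \<chi>\<^sub>0 g \<cdot> f\<close>, which kills the
  \<open>\<chi>\<^sub>0\<close>-component and rescales the others by nonzero factors.\<close>

lemma eigenfun_sum_in_ideal: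
  assumes I: "is_pf_ideal I" and stable: "\<forall>g\<in>\<Gamma>. \<forall>f\<in>I. (\<lambda>x. f (act g x)) \<in> I"
  shows "finite F \<Longrightarrow> \<forall>k\<in>F. eigenfun act \<Gamma> (\<chi> k) (h k) \<Longrightarrow>
    \<forall>k\<in>F. \<forall>k'\<in>F. k \<noteq> k' \<longrightarrow> (\<exists>g\<in>\<Gamma>. \<chi> k g \<noteq> \<chi> k' g) \<Longrightarrow>
    (\<lambda>x. \<Sum>k\<in>F. h k x) \<in> I \<Longrightarrow> \<forall>k\<in>F. h k \<in> I"
proof (induction F arbitrary: h rule: finite_induct)
  case empty
  then show ?case
    by simp
next
  case (insert k0 F)
  define tot where "tot = (\<lambda>x. \<Sum>k\<in>insert k0 F. h k x)"
  have "tot \<in> I"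
    using insert.prems(3) by (simp add: tot_def)
  have rest: "h k1 \<in> I" if k1: "k1 \<in> F" for k1
  proof -
    have "k1 \<noteq> k0"
      using k1 insert.hyps(2) by blast
    then obtain g where g: "g \<in> \<Gamma>" "\<chi> k1 g \<noteq> \<chi> k0 g"
      using insert.prems(2)[rule_format, of k1 k0] k1 by auto
    define h' where "h' = (\<lambda>k x. (\<chi> k g - \<chi> k0 g) * h k x)"
    have "(\<lambda>x. tot (act g x) - \<chi> k0 g * tot x) \<in> I"
      using pf_ideal_diff[OF I stable[rule_format, OF g(1) \<open>tot \<in> I\<close>] pf_ideal_smult[OF I \<open>tot \<in> I\<close>]] .
    moreover have "tot (act g x) - \<chi> k0 g * tot x = (\<Sum>k\<in>F. h' k x)" for x
      using eigenfun_sum_twist[OF insert.prems(1) g(1), of x "\<chi> k0 g"] insert.hyps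
      by (simp add: tot_def h'_def)
    ultimately have "(\<lambda>x. \<Sum>k\<in>F. h' k x) \<in> I"
      by (rule fun_mem_cong)
    moreover have "\<forall>k\<in>F. eigenfun act \<Gamma> (\<chi> k) (h' k)"
      using insert.prems(1) by (simp add: h'_def eigenfun_smult)
    moreover have "\<forall>k\<in>F. \<forall>k'\<in>F. k \<noteq> k' \<longrightarrow> (\<exists>g\<in>\<Gamma>. \<chi> k g \<noteq> \<chi> k' g)"
      using insert.prems(2) by simp
    ultimately have "\<forall>k\<in>F. h' k \<in> I"
      by (intro insert.IH)
    then have "h' k1 \<in> I"
      using k1 ..
    then show "h k1 \<in> I"
      using pf_ideal_unit_smult[OF I] g(2) by (simp add: h'_def)
  qed
  have "(\<lambda>x. tot x - (\<Sum>k\<in>F. h k x)) \<in> I"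
    using rest by (intro pf_ideal_diff[OF I \<open>tot \<in> I\<close>] pf_ideal_sum[OF I insert.hyps(1)])
  then have "h k0 \<in> I"
    by (rule fun_mem_cong) (use insert.hyps in \<open>simp add: tot_def\<close>)
  then show ?case
    using rest by blast
qed

lemma eigenfun_component_in_ideal:
  assumes I: "is_pf_ideal I" and stable: "\<forall>g\<in>\<Gamma>. \<forall>f\<in>I. (\<lambda>x. f (act g x)) \<in> I"
    and F: "finite F" "\<forall>k\<in>F. eigenfun act \<Gamma> (\<chi> k) (h k)"
      "\<forall>k\<in>F. \<forall>k'\<in>F. k \<noteq> k' \<longrightarrow> (\<exists>g\<in>\<Gamma>. \<chi> k g \<noteq> \<chi> k' g)"
    and weight: "\<forall>g\<in>\<Gamma>. (\<lambda>x. (\<Sum>k\<in>F. h k (act g x)) - \<chi>0 g * (\<Sum>k\<in>F. h k x)) \<in> I"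
    and k1: "k1 \<in> F" "g \<in> \<Gamma>" "\<chi> k1 g \<noteq> \<chi>0 g"
  shows "h k1 \<in> I"
proof -
  define h' where "h' = (\<lambda>k x. (\<chi> k g - \<chi>0 g) * h k x)"
  have "(\<lambda>x. \<Sum>k\<in>F. h' k x) \<in> I"
    using fun_mem_cong[OF weight[rule_format, OF k1(2)]] eigenfun_sum_twist[OF F(2) k1(2)]
    by (simp add: h'_def)
  moreover have "\<forall>k\<in>F. eigenfun act \<Gamma> (\<chi> k) (h' k)"
    using F(2) by (simp add: h'_def eigenfun_smult)
  ultimately have "\<forall>k\<in>F. h' k \<in> I"
    using eigenfun_sum_in_ideal[OF I stable F(1) _ F(3)] by simp
  then have "h' k1 \<in> I"
    using k1(1) ..
  then show ?thesis
    using pf_ideal_unit_smult[OF I] k1(3) by (simp add: h'_def)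
qed

lemma weight_space_mod_cong:
  assumes I: "is_pf_ideal I" and stable: "\<forall>(t, \<zeta>)\<in>Ggrp m. \<forall>f\<in>I. (\<lambda>x. f (gact p q t \<zeta> x)) \<in> I"
    and g: "g \<in> weight_space_mod p q m I n d" and "h \<in> polyfun" and gh: "(\<lambda>x. g x - h x) \<in> I"
  shows "h \<in> weight_space_mod p q m I n d"
  unfolding weight_space_mod_def
proof (intro CollectI conjI ballI \<open>h \<in> polyfun\<close>, clarify)
  fix t \<zeta> assume tz: "(t, \<zeta>) \<in> Ggrp m"
  have "\<forall>f\<in>I. (\<lambda>x. f (gact p q t \<zeta> x)) \<in> I"
    using stable tz by auto
  from bspec[OF this gh]
  have "(\<lambda>x. g (gact p q t \<zeta> x) - h (gact p q t \<zeta> x)) \<in> I"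
    by simp
  then have "(\<lambda>x. (g (gact p q t \<zeta> x) - h (gact p q t \<zeta> x)) - chi n d t \<zeta> * (g x - h x)) \<in> I"
    by (rule pf_ideal_diff[OF I _ pf_ideal_smult[OF I gh]])
  moreover have "(\<lambda>x. g (gact p q t \<zeta> x) - chi n d t \<zeta> * g x) \<in> I"
    using g tz unfolding weight_space_mod_def by auto
  ultimately have "(\<lambda>x. (g (gact p q t \<zeta> x) - chi n d t \<zeta> * g x)
      - ((g (gact p q t \<zeta> x) - h (gact p q t \<zeta> x)) - chi n d t \<zeta> * (g x - h x))) \<in> I"
    using pf_ideal_diff[OF I] by blast
  then show "(\<lambda>x. h (gact p q t \<zeta> x) - chi n d t \<zeta> * h x) \<in> I"
    by (rule fun_mem_cong) (simp add: algebra_simps)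
qed

lemma inv_hilb_point_proper:
  assumes "I \<in> inv_hilb_points p q m"
  obtains f where "f \<in> polyfun" "f \<notin> I"
proof -
  obtain f where "f \<in> weight_space_mod p q m I 0 0" "f \<notin> I"
    using assms unfolding inv_hilb_points_def dim_one_mod_def by blast
  then show thesis
    using that unfolding weight_space_mod_def by blast
qed

section \<open>Standard exponents\<close>

lemma weight_eq_imp_progression:
  fixes p q a r i i' j j' k k' :: int
  assumes i: "0 \<le> i" "i < q - p" "0 \<le> i'" "i' < q - p"
    and n: "i - p * j + q * k = i' - p * j' + q * k'"
    and d: "(k - j) - (k' - j') = a * (q - p) * r"
  shows "i' = i \<and> j' = j + a * q * r \<and> k' = k + a * p * r"
proof -
  have kk: "k - k' = j - j' + a * (q - p) * r"
    using d by linarith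
  have "i' - i = p * (j' - j) + q * (k - k')"
    using n by (simp add: algebra_simps)
  also have "\<dots> = (q - p) * (j - j' + a * q * r)"
    unfolding kk by (simp add: algebra_simps)
  finally have ii: "i' - i = (q - p) * (j - j' + a * q * r)" .
  then have "i' mod (q - p) = i mod (q - p)"
    by (simp add: mod_eq_dvd_iff)
  then have "i' = i"
    using i by simp
  moreover have "q - p \<noteq> 0"
    using i by linarith
  ultimately have "j - j' + a * q * r = 0"
    using ii by simp
  then have "j' = j + a * q * r"
    by linarith
  moreover have "k' = k + a * p * r"
    using kk calculation by (simp add: algebra_simps)
  ultimately show ?thesis
    using \<open>i' = i\<close> by simp
qed

lemma progression_standard_member_unique:
  fixes x y A B r :: int
  assumes "0 \<le> A" "0 \<le> B" "0 \<le> x" "0 \<le> y" "0 \<le> x + A * r" "0 \<le> y + B * r"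
    and "\<not> (A \<le> x \<and> B \<le> y)" "\<not> (A \<le> x + A * r \<and> B \<le> y + B * r)"
  shows "r = 0"
proof (rule ccontr)
  assume "r \<noteq> 0"
  then consider "1 \<le> r" | "1 \<le> - r"
    by linarith
  then show False
  proof cases
    case 1
    then have "A \<le> A * r" "B \<le> B * r"
      using mult_left_mono[OF 1] assms(1,2) by simp_all
    then show False
      using assms(3,4,8) by linarith
  next
    case 2
    then have "A \<le> A * (- r)" "B \<le> B * (- r)"
      using mult_left_mono[OF 2] assms(1,2) by simp_all
    then show False
      using assms(5,6,7) by simp
  qed
qed

lemma min_div_remainders:
  fixes j k A B :: int
  assumes "0 < A" "0 < B"
  defines "r \<equiv> min (j div A) (k div B)"
  shows "0 \<le> j - A * r" "0 \<le> k - B * r" "j - A * r < A \<or> k - B * r < B"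
proof -
  have "A * r \<le> A * (j div A)"
    using assms(1) by (intro mult_left_mono) (simp_all add: r_def)
  also have "\<dots> = j - j mod A"
    by (simp add: minus_mod_eq_mult_div)
  finally show "0 \<le> j - A * r"
    using pos_mod_sign[OF assms(1), of j] by linarith
  have "B * r \<le> B * (k div B)"
    using assms(2) by (intro mult_left_mono) (simp_all add: r_def)
  also have "\<dots> = k - k mod B"
    by (simp add: minus_mod_eq_mult_div)
  finally show "0 \<le> k - B * r"
    using pos_mod_sign[OF assms(2), of k] by linarith
  show "j - A * r < A \<or> k - B * r < B"
  proof (cases "j div A \<le> k div B")
    case True
    then have "j - A * r = j mod A"
      by (simp add: r_def minus_mult_div_eq_mod)
    then show ?thesis
      using assms(1) by simp
  next
    case False
    then have "k - B * r = k mod B"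
      by (simp add: r_def minus_mult_div_eq_mod)
    then show ?thesis
      using assms(2) by simp
  qed
qed

lemma std_exp_eqI:
  assumes "std_exp p q a \<alpha>" "std_exp p q a \<beta>" "\<alpha> 0 = \<beta> 0" "\<alpha> 1 = \<beta> 1" "\<alpha> 3 = \<beta> 3"
  shows "\<alpha> = \<beta>"
proof
  fix i
  show "\<alpha> i = \<beta> i"
  proof (cases "i < 5")
    case True
    then show ?thesis
      using assms by (auto simp: std_exp_def dest: less_5_cases)
  next
    case False
    then show ?thesis
      using assms(1,2) by (simp add: std_exp_def exps_def)
  qed
qed

locale toric =
  fixes p q m a :: nat
  assumes p_pos: "0 < p" and p_less_q: "p < q" and a_pos: "0 < a" and m_eq: "m = a * (q - p)"
begin

lemma m_pos: "0 < m"
  using m_eq p_less_q a_pos by simp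

lemma int_m: "int m = int a * (int q - int p)"
  using m_eq p_less_q by (simp add: of_nat_diff)

lemma std_exp_unique:
  assumes \<alpha>: "std_exp p q a \<alpha>" and \<beta>: "std_exp p q a \<beta>"
    and n: "deg_t p q \<alpha> = deg_t p q \<beta>" and d: "int m dvd deg_zeta \<alpha> - deg_zeta \<beta>"
  shows "\<alpha> = \<beta>"
proof -
  obtain r where r: "deg_zeta \<alpha> - deg_zeta \<beta> = int m * r"
    using d by blast
  have z: "\<alpha> 2 = 0" "\<alpha> 4 = 0" "\<beta> 2 = 0" "\<beta> 4 = 0"
    using \<alpha> \<beta> by (auto simp: std_exp_def)
  have "int (\<alpha> 0) < int q - int p" "int (\<beta> 0) < int q - int p"
    using \<alpha> \<beta> p_less_q by (auto simp: std_exp_def)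
  then have prog: "int (\<beta> 0) = int (\<alpha> 0) \<and> int (\<beta> 1) = int (\<alpha> 1) + int a * int q * r
      \<and> int (\<beta> 3) = int (\<alpha> 3) + int a * int p * r"
    using n r z by (intro weight_eq_imp_progression) (auto simp: deg_t_def deg_zeta_def int_m)
  have "r = 0"
    using \<alpha> \<beta> prog
    by (intro progression_standard_member_unique[of "int a * int q" "int a * int p" "int (\<alpha> 1)" "int (\<alpha> 3)"])
      (auto simp: std_exp_def mult.assoc simp flip: of_nat_mult)
  then show "\<alpha> = \<beta>"
    using prog by (intro std_exp_eqI[OF \<alpha> \<beta>]) simp_all
qed

text \<open>The standard solution is the last member with \<open>j, k \<ge> 0\<close> of the progression
  \<open>(j, k) \<mapsto> (j - a q, k - a p)\<close>.\<close>

lemma std_exp_exists: "\<exists>\<alpha>. std_exp p q a \<alpha> \<and> deg_t p q \<alpha> = n \<and> int m dvd deg_zeta \<alpha> - d"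
proof -
  define Q where "Q = int q - int p"
  define i where "i = (n - int q * d) mod Q"
  define j0 where "j0 = (n - int q * d) div Q"
  define k0 where "k0 = j0 + d"
  define r where "r = min (j0 div (int a * int q)) (k0 div (int a * int p))"
  define j where "j = j0 - int a * int q * r"
  define k where "k = k0 - int a * int p * r"
  have i: "0 \<le> i" "i < Q"
    using p_less_q by (simp_all add: i_def Q_def)
  have "0 < int a * int q" "0 < int a * int p"
    using a_pos p_pos p_less_q by simp_all
  then have j: "0 \<le> j" and k: "0 \<le> k" and jk: "j < int a * int q \<or> k < int a * int p"
    unfolding j_def k_def r_def by (rule min_div_remainders)+
  define \<alpha> where "\<alpha> = (0 :: nat \<Rightarrow> nat)(0 := nat i, 1 := nat j, 3 := nat k)"
  have "std_exp p q a \<alpha>"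
    using i j k jk unfolding std_exp_def \<alpha>_def Q_def by (auto simp: exps_def le_nat_iff)
  moreover have "deg_t p q \<alpha> = n"
  proof -
    have "deg_t p q \<alpha> = i - int p * j + int q * k"
      using i j k by (simp add: \<alpha>_def deg_t_def)
    also have "\<dots> = (Q * j0 + i) + int q * d"
      by (simp add: Q_def j_def k_def k0_def algebra_simps)
    also have "\<dots> = n"
      by (simp add: i_def j0_def mult_div_mod_eq)
    finally show ?thesis .
  qed
  moreover have "deg_zeta \<alpha> - d = int m * r"
    using j k by (simp add: \<alpha>_def deg_zeta_def j_def k_def k0_def int_m algebra_simps)
  ultimately show ?thesis
    by (metis dvd_triv_left)
qed

section \<open>\<open>J0\<close> is the only \<open>B\<close>-fixed point\<close>

lemma mon_eigenfun:
  "eigenfun (case_prod (gact p q)) (Ggrp m) (case_prod (chi (deg_t p q \<alpha>) (deg_zeta \<alpha>)))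
     (\<lambda>x. c * mon \<alpha> x)"
  unfolding eigenfun_def using Ggrp_nonzero[OF m_pos] by (auto simp: mon_gact_chi)

lemma std_exp_char_differs:
  assumes "std_exp p q a \<alpha>" "std_exp p q a \<beta>" "deg_t p q \<beta> = n" "int m dvd deg_zeta \<beta> - d"
    and "\<alpha> \<noteq> \<beta>"
  shows "\<exists>h\<in>Ggrp m. case_prod (chi (deg_t p q \<alpha>) (deg_zeta \<alpha>)) h \<noteq> case_prod (chi n d) h"
proof (rule ccontr)
  assume "\<not> ?thesis"
  then have "\<forall>(t, \<zeta>)\<in>Ggrp m. chi (deg_t p q \<alpha>) (deg_zeta \<alpha>) t \<zeta> = chi n d t \<zeta>"
    by auto
  then have "deg_t p q \<alpha> = n" "int m dvd deg_zeta \<alpha> - d"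
    using chi_eq_on_Ggrp_iff[OF m_pos] by auto
  moreover have "int m dvd (deg_zeta \<alpha> - d) - (deg_zeta \<beta> - d)"
    using \<open>int m dvd deg_zeta \<alpha> - d\<close> assms(4) by (rule dvd_diff)
  ultimately have "\<alpha> = \<beta>"
    using std_exp_unique[OF assms(1,2)] assms(3) by simp
  then show False
    using assms(5) by simp
qed

lemma std_exp_chars_distinct:
  assumes "\<forall>\<alpha>\<in>S. std_exp p q a \<alpha>"
  shows "\<forall>\<alpha>\<in>S. \<forall>\<beta>\<in>S. \<alpha> \<noteq> \<beta> \<longrightarrow> (\<exists>h\<in>Ggrp m.
    case_prod (chi (deg_t p q \<alpha>) (deg_zeta \<alpha>)) h \<noteq> case_prod (chi (deg_t p q \<beta>) (deg_zeta \<beta>)) h)"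
proof (intro ballI impI)
  fix \<alpha> \<beta> assume "\<alpha> \<in> S" "\<beta> \<in> S" "\<alpha> \<noteq> \<beta>"
  then show "\<exists>h\<in>Ggrp m.
      case_prod (chi (deg_t p q \<alpha>) (deg_zeta \<alpha>)) h \<noteq> case_prod (chi (deg_t p q \<beta>) (deg_zeta \<beta>)) h"
    using std_exp_char_differs[of \<alpha> \<beta> "deg_t p q \<beta>" "deg_zeta \<beta>"] assms by simp
qed

lemma mon_in_weight_space_mod:
  assumes "is_pf_ideal I" "deg_t p q \<alpha> = n" "int m dvd deg_zeta \<alpha> - d"
  shows "mon \<alpha> \<in> weight_space_mod p q m I n d"
  unfolding weight_space_mod_def
proof (intro CollectI conjI mon_polyfun ballI, clarify)
  fix t \<zeta> assume tz: "(t, \<zeta>) \<in> Ggrp m"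
  then have "chi (deg_t p q \<alpha>) (deg_zeta \<alpha>) t \<zeta> = chi n d t \<zeta>"
    using chi_eq_on_Ggrp_iff[OF m_pos, of "deg_t p q \<alpha>" "deg_zeta \<alpha>" n d] assms(2,3) by auto
  then show "(\<lambda>x. mon \<alpha> (gact p q t \<zeta> x) - chi n d t \<zeta> * mon \<alpha> x) \<in> I"
    using pf_ideal_zero[OF assms(1)] Ggrp_nonzero[OF m_pos tz] by (simp add: mon_gact_chi)
qed

text \<open>Reduce modulo \<open>J0\<close> to a combination of standard monomials; all of them except the one
  of weight \<open>(n, d)\<close> are eigenfunctions of other characters and hence fall into \<open>I\<close>.\<close>

lemma weight_space_mod_std_span:
  assumes I: "is_pf_ideal I" and stable: "\<forall>(t, \<zeta>)\<in>Ggrp m. \<forall>f\<in>I. (\<lambda>x. f (gact p q t \<zeta> x)) \<in> I"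
    and J0: "J0 p q a \<subseteq> I" and g: "g \<in> weight_space_mod p q m I n d"
    and \<alpha>0: "std_exp p q a \<alpha>0" "deg_t p q \<alpha>0 = n" "int m dvd deg_zeta \<alpha>0 - d"
  shows "\<exists>c. (\<lambda>x. g x - c * mon \<alpha>0 x) \<in> I"
proof -
  let ?act = "case_prod (gact p q)"
  let ?\<chi> = "\<lambda>\<alpha>. case_prod (chi (deg_t p q \<alpha>) (deg_zeta \<alpha>))"
  have stable': "\<forall>h\<in>Ggrp m. \<forall>f\<in>I. (\<lambda>x. f (?act h x)) \<in> I"
    using stable by auto
  have g_pf: "g \<in> polyfun"
    using g unfolding weight_space_mod_def by auto
  obtain S c where S: "finite S" "\<forall>\<alpha>\<in>S. std_exp p q a \<alpha>"
    and D: "(\<lambda>x. g x - (\<Sum>\<alpha>\<in>S. c \<alpha> * mon \<alpha> x)) \<in> J0 p q a"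
    using J0_normal_form[OF g_pf] by blast
  define R where "R = (\<lambda>x. \<Sum>\<alpha>\<in>S. c \<alpha> * mon \<alpha> x)"
  have DI: "(\<lambda>x. g x - R x) \<in> I"
    using D J0 by (auto simp: R_def)
  have "R \<in> weight_space_mod p q m I n d"
    using S(1) by (intro weight_space_mod_cong[OF I stable g _ DI])
      (auto simp: R_def intro!: pf_sum pf_smult mon_polyfun)
  then have R_weight: "\<forall>h\<in>Ggrp m. (\<lambda>x. (\<Sum>\<alpha>\<in>S. c \<alpha> * mon \<alpha> (?act h x))
      - case_prod (chi n d) h * (\<Sum>\<alpha>\<in>S. c \<alpha> * mon \<alpha> x)) \<in> I"
    unfolding weight_space_mod_def R_def by auto
  have eigen: "\<forall>\<alpha>\<in>S. eigenfun ?act (Ggrp m) (?\<chi> \<alpha>) (\<lambda>x. c \<alpha> * mon \<alpha> x)"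
    by (simp add: mon_eigenfun)
  have other: "(\<lambda>x. c \<alpha> * mon \<alpha> x) \<in> I" if \<alpha>: "\<alpha> \<in> S - {\<alpha>0}" for \<alpha>
  proof -
    obtain h where h: "h \<in> Ggrp m" "?\<chi> \<alpha> h \<noteq> case_prod (chi n d) h"
      using std_exp_char_differs[OF _ \<alpha>0, of \<alpha>] S(2) \<alpha> by auto
    show ?thesis
      using \<alpha> h by (intro eigenfun_component_in_ideal[where h = "\<lambda>\<alpha> x. c \<alpha> * mon \<alpha> x",
            OF I stable' S(1) eigen std_exp_chars_distinct[OF S(2)] R_weight]) auto
  qed
  define c0 where "c0 = (if \<alpha>0 \<in> S then c \<alpha>0 else 0)"
  have "(\<lambda>x. (g x - R x) + (\<Sum>\<alpha>\<in>S - {\<alpha>0}. c \<alpha> * mon \<alpha> x)) \<in> I"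
    using S(1) other by (intro pf_ideal_add[OF I DI] pf_ideal_sum[OF I]) auto
  moreover have "(g x - R x) + (\<Sum>\<alpha>\<in>S - {\<alpha>0}. c \<alpha> * mon \<alpha> x) = g x - c0 * mon \<alpha>0 x" for x
    using S(1) by (cases "\<alpha>0 \<in> S") (simp_all add: R_def c0_def sum.remove)
  ultimately have "(\<lambda>x. g x - c0 * mon \<alpha>0 x) \<in> I"
    by (rule fun_mem_cong)
  then show ?thesis ..
qed

lemma J0_dim_one: "dim_one_mod (weight_space_mod p q m (J0 p q a) n d) (J0 p q a)"
proof -
  obtain \<alpha>0 where \<alpha>0: "std_exp p q a \<alpha>0" "deg_t p q \<alpha>0 = n" "int m dvd deg_zeta \<alpha>0 - d"
    using std_exp_exists by blast
  have "mon \<alpha>0 \<in> weight_space_mod p q m (J0 p q a) n d"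
    by (rule mon_in_weight_space_mod[OF J0_is_ideal \<alpha>0(2,3)])
  moreover have "mon \<alpha>0 \<notin> J0 p q a"
    using mon_in_J0_iff \<alpha>0(1) by (simp add: std_exp_def)
  moreover have "\<forall>g\<in>weight_space_mod p q m (J0 p q a) n d. \<exists>c. (\<lambda>x. g x - c * mon \<alpha>0 x) \<in> J0 p q a"
    using weight_space_mod_std_span[OF J0_is_ideal _ subset_refl _ \<alpha>0] J0_gact_stable by blast
  ultimately show ?thesis
    unfolding dim_one_mod_def by blast
qed

lemma J0_in_inv_hilb_points: "J0 p q a \<in> inv_hilb_points p q m"
  unfolding inv_hilb_points_def using J0_is_ideal H_eq_in_J0 J0_gact_stable J0_dim_one by auto

lemma inv_hilb_point_lin_dep:
  assumes "I \<in> inv_hilb_points p q m"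
    and "deg_t p q \<alpha> = deg_t p q \<beta>" "int m dvd deg_zeta \<alpha> - deg_zeta \<beta>"
  obtains c1 c2 where "c1 \<noteq> 0 \<or> c2 \<noteq> 0" "(\<lambda>x. c1 * mon \<alpha> x + c2 * mon \<beta> x) \<in> I"
proof -
  have I: "is_pf_ideal I"
    and dim: "dim_one_mod (weight_space_mod p q m I (deg_t p q \<beta>) (deg_zeta \<beta>)) I"
    using assms(1) unfolding inv_hilb_points_def by auto
  show thesis
    by (rule dim_one_mod_lin_dep[OF I dim mon_in_weight_space_mod[OF I assms(2,3)]
          mon_in_weight_space_mod[OF I refl]]) (auto intro: that)
qed

text \<open>Equal weights give a linear relation between \<open>X\<^sub>i\<close> and \<open>X\<^sub>j\<close> in \<open>I\<close>; the unipotent element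
  \<open>X\<^sub>i \<mapsto> X\<^sub>i + X\<^sub>j\<close> of \<open>B\<close> then isolates \<open>X\<^sub>j\<close>.\<close>

lemma B_fixed_point_shear:
  assumes "I \<in> inv_hilb_points p q m" "B_stable I" and ij: "i < 5" "j < 5"
    and wt: "deg_t p q (0(i := 1)) = deg_t p q (0(j := 1))" "deg_zeta (0(i := 1)) = deg_zeta (0(j := 1))"
    and b: "\<And>x. bact 1 1 x i = x i + x j" "\<And>x. bact 1 1 x j = x j"
  shows "(\<lambda>x. x j) \<in> I"
proof -
  have I: "is_pf_ideal I"
    using assms(1) unfolding inv_hilb_points_def by auto
  obtain c1 c2 where c: "c1 \<noteq> 0 \<or> c2 \<noteq> 0"
    and lin: "(\<lambda>x. c1 * mon (0(i := 1)) x + c2 * mon (0(j := 1)) x) \<in> I"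
    by (rule inv_hilb_point_lin_dep[OF assms(1) wt(1)]) (use wt(2) in auto)
  from lin have lin': "(\<lambda>x. c1 * x i + c2 * x j) \<in> I"
    by (rule fun_mem_cong) (simp add: mon_single ij)
  have "(\<lambda>x. c1 * bact 1 1 x i + c2 * bact 1 1 x j) \<in> I"
    using assms(2)[unfolded B_stable_def, rule_format, OF _ lin', of 1 1] by simp
  then show ?thesis
    using b by (intro pf_ideal_shear[where f = "\<lambda>x. x i" and \<phi> = "bact 1 1", OF I c lin']) simp_all
qed

text \<open>\<open>1\<close> and \<open>X\<^sub>1\<^sup>a\<^sup>q X\<^sub>3\<^sup>a\<^sup>p\<close> have equal weights; the torus of \<open>B\<close> scales the monomial but not
  the constant.\<close>

lemma B_fixed_point_contains_X1_X3_monomial: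
  assumes "I \<in> inv_hilb_points p q m" "B_stable I"
  shows "(\<lambda>x. x 1 ^ (a * q) * x 3 ^ (a * p)) \<in> I"
proof -
  define M :: pfun where "M x = x 1 ^ (a * q) * x 3 ^ (a * p)" for x
  have I: "is_pf_ideal I"
    using assms(1) unfolding inv_hilb_points_def by auto
  obtain f0 where f0: "f0 \<in> polyfun" "f0 \<notin> I"
    using inv_hilb_point_proper[OF assms(1)] .
  have "deg_t p q 0 = deg_t p q (0(1 := a * q, 3 := a * p))"
    "int m dvd deg_zeta 0 - deg_zeta (0(1 := a * q, 3 := a * p))"
    by (simp_all add: deg_t_def deg_zeta_def int_m algebra_simps)
  then obtain c1 c2 where c: "c1 \<noteq> 0 \<or> c2 \<noteq> 0"
    and lin: "(\<lambda>x. c1 * mon 0 x + c2 * mon (0(1 := a * q, 3 := a * p)) x) \<in> I"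
    by (rule inv_hilb_point_lin_dep[OF assms(1)])
  from lin have c': "(\<lambda>x. c1 + c2 * M x) \<in> I"
    by (rule fun_mem_cong) (simp add: M_def mon_eq)
  have "c2 \<noteq> 0"
  proof
    assume "c2 = 0"
    then have "(\<lambda>x. c1) \<in> I"
      using c' by simp
    then have "c1 = 0"
      by (rule pf_ideal_const_eq_0[OF I f0])
    with c \<open>c2 = 0\<close> show False
      by simp
  qed
  have "(\<lambda>x. inverse c2 * (c1 + c2 * M x)) \<in> I"
    by (rule pf_ideal_smult[OF I c'])
  then have Mc: "(\<lambda>x. M x + c1 / c2) \<in> I"
    by (rule fun_mem_cong) (simp add: field_simps \<open>c2 \<noteq> 0\<close>)
  have Mb: "(\<lambda>x. M (bact 2 0 x) + c1 / c2) \<in> I"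
    using assms(2)[unfolded B_stable_def, rule_format, OF _ Mc, of 2 0] by simp
  have Meig: "M (bact 2 0 x) = 2 ^ (a * q + a * p) * M x" for x
    by (simp add: M_def bact_def power_mult_distrib power_add)
  have "(2::nat) ^ (a * q + a * p) \<noteq> 1"
    using a_pos p_less_q by simp
  then have "(2::complex) ^ (a * q + a * p) \<noteq> 1"
    by (metis of_nat_eq_1_iff of_nat_numeral of_nat_power)
  with Mc Mb Meig have "M \<in> I"
    by (intro pf_ideal_eigen_plus_const[where g = M and \<phi> = "bact 2 0", OF I f0])
  then show ?thesis
    by (simp add: M_def[abs_def])
qed

lemma J0_subset_B_fixed_point:
  assumes "I \<in> inv_hilb_points p q m" "B_stable I"
  shows "J0 p q a \<subseteq> I"
proof -
  have I: "is_pf_ideal I" and H: "H_eq p q \<in> I"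
    using assms(1) unfolding inv_hilb_points_def by auto
  have x2: "(\<lambda>x. x 2) \<in> I"
    by (rule B_fixed_point_shear[OF assms, of 1]) (simp_all add: deg_t_def deg_zeta_def bact_def)
  have x4: "(\<lambda>x. x 4) \<in> I"
    by (rule B_fixed_point_shear[OF assms, of 3]) (simp_all add: deg_t_def deg_zeta_def bact_def)
  have "(\<lambda>x. H_eq p q x + (x 1 * x 4 - x 3 * x 2)) \<in> I"
    using pf_ideal_mult[OF I pf_coord x4, of 1] pf_ideal_mult[OF I pf_coord x2, of 3]
    by (intro pf_ideal_add[OF I H] pf_ideal_diff[OF I]) simp_all
  then have x0: "(\<lambda>x. x 0 ^ (q - p)) \<in> I"
    by (rule fun_mem_cong) (simp add: H_eq_def)
  show ?thesis
    unfolding J0_def using x0 x2 x4 B_fixed_point_contains_X1_X3_monomial[OF assms]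
    by (intro pf_ideal_gen_least[OF I]) simp
qed

lemma std_mon_notin_inv_hilb_point:
  assumes "I \<in> inv_hilb_points p q m" "J0 p q a \<subseteq> I" "std_exp p q a \<alpha>"
  shows "mon \<alpha> \<notin> I"
proof
  assume "mon \<alpha> \<in> I"
  have I: "is_pf_ideal I" and stable: "\<forall>(t, \<zeta>)\<in>Ggrp m. \<forall>f\<in>I. (\<lambda>x. f (gact p q t \<zeta> x)) \<in> I"
    using assms(1) unfolding inv_hilb_points_def by auto
  have "dim_one_mod (weight_space_mod p q m I (deg_t p q \<alpha>) (deg_zeta \<alpha>)) I"
    using assms(1) unfolding inv_hilb_points_def by blast
  then obtain f where f: "f \<in> weight_space_mod p q m I (deg_t p q \<alpha>) (deg_zeta \<alpha>)" "f \<notin> I"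
    unfolding dim_one_mod_def by blast
  obtain c where "(\<lambda>x. f x - c * mon \<alpha> x) \<in> I"
    using weight_space_mod_std_span[OF I stable assms(2) f(1) assms(3)] by auto
  from pf_ideal_add[OF I this pf_ideal_smult[OF I \<open>mon \<alpha> \<in> I\<close>, of c]] have "f \<in> I"
    by simp
  with f(2) show False ..
qed

lemma inv_hilb_point_subset_J0:
  assumes "I \<in> inv_hilb_points p q m" "J0 p q a \<subseteq> I"
  shows "I \<subseteq> J0 p q a"
proof
  fix f assume "f \<in> I"
  have I: "is_pf_ideal I" and stable: "\<forall>h\<in>Ggrp m. \<forall>f\<in>I. (\<lambda>x. f (case_prod (gact p q) h x)) \<in> I"
    using assms(1) unfolding inv_hilb_points_def by auto
  have "f \<in> polyfun"
    using pf_ideal_subset[OF I] \<open>f \<in> I\<close> by blast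
  then obtain S c where S: "finite S" "\<forall>\<alpha>\<in>S. std_exp p q a \<alpha>"
    and D: "(\<lambda>x. f x - (\<Sum>\<alpha>\<in>S. c \<alpha> * mon \<alpha> x)) \<in> J0 p q a"
    by (rule J0_normal_form)
  have "(\<lambda>x. f x - (f x - (\<Sum>\<alpha>\<in>S. c \<alpha> * mon \<alpha> x))) \<in> I"
    by (rule pf_ideal_diff[OF I \<open>f \<in> I\<close> subsetD[OF assms(2) D]])
  then have sum: "(\<lambda>x. \<Sum>\<alpha>\<in>S. c \<alpha> * mon \<alpha> x) \<in> I"
    by simp
  have eigen: "\<forall>\<alpha>\<in>S. eigenfun (case_prod (gact p q)) (Ggrp m)
      (case_prod (chi (deg_t p q \<alpha>) (deg_zeta \<alpha>))) (\<lambda>x. c \<alpha> * mon \<alpha> x)"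
    by (simp add: mon_eigenfun)
  have each: "\<forall>\<alpha>\<in>S. (\<lambda>x. c \<alpha> * mon \<alpha> x) \<in> I"
    by (rule eigenfun_sum_in_ideal[OF I stable S(1) eigen std_exp_chars_distinct[OF S(2)] sum])
  have "c \<alpha> = 0" if "\<alpha> \<in> S" for \<alpha>
  proof (rule ccontr)
    assume "c \<alpha> \<noteq> 0"
    have "(\<lambda>x. c \<alpha> * mon \<alpha> x) \<in> I"
      using each that ..
    then have "mon \<alpha> \<in> I"
      using \<open>c \<alpha> \<noteq> 0\<close> by (rule pf_ideal_unit_smult[OF I])
    then show False
      using std_mon_notin_inv_hilb_point[OF assms S(2)[rule_format, OF that]] by contradiction
  qed
  then show "f \<in> J0 p q a"
    using D by simp
qed

end

theorem proposition5p1: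
  fixes p q m a :: nat
  assumes "0 < p" and "p \<le> q" and "coprime p q" and "0 < m"
    and "m = a * (q - p)"
  shows "{I \<in> inv_hilb_points p q m. B_stable I} = {J0 p q a}"
proof -
  have "0 < a" "p < q"
    using assms(4,5) by simp_all
  then interpret toric p q m a
    using assms(1,5) by unfold_locales
  have "I = J0 p q a" if "I \<in> inv_hilb_points p q m" "B_stable I" for I
    using J0_subset_B_fixed_point[OF that] inv_hilb_point_subset_J0[OF that(1)] by blast
  then show ?thesis
    using J0_in_inv_hilb_points B_stable_J0 by blast
qed

end
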